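(* (Sum rule.) With $|\mathrm{SRU}_2(\gamma,\Phi;\mu)\rangle$ as defined in the context, for all $\Phi,\mu\in\mathbb{R}$ and all $\gamma$, $$I_\Phi\big(|\mathrm{SRU}_2(\tfrac{\pi}{2},\Phi;\mu)\rangle\big)+I_\gamma\big(|\mathrm{SRU}_2(\gamma,\Phi;\mu)\rangle\big)=4S_M\Big(S_M+1-S_M\cos^{4S_P}(\mu/2)\Big),$$ which is independent of $\Phi$. Moreover, $\max_\Phi I_\Phi\big(|\mathrm{SRU}_2(\tfrac{\pi}{2},\Phi;\pi)\rangle\big)=4S_M^2+2S_M$.
   Context: Spins $S_M,S_P\in\{\tfrac12,1,\dots\}$ with $S_z$-eigenbases in the standard irreducible representations of $\mathfrak{su}(2)$. Spin coherent state: $|S,S\rangle_{\theta,\phi}=\sum_{M}\sqrt{\binom{2S}{S+M}}\cos^{S+M}(\theta/2)\sin^{S-M}(\theta/2)e^{i(S-M)\phi}|S,M\rangle$. $S(\Phi)=\cos\Phi\,S_x+\sin\Phi\,S_y$. $|\mathrm{SRU}_2(\gamma,\Phi;\mu)\rangle=e^{-i\mu S_z\otimes S_z}(e^{i\gamma S(\Phi)}\otimes\mathbb{I})e^{i\mu S_z\otimes S_z}(|S_M,S_M\rangle_{\pi/2,0}\otimes|S_P,S_P\rangle_{\pi/2,0})$, first factor the main spin. $I_\gamma$ and $I_\Phi$ denote the pure-state quantum Fisher informations $4(\langle\partial\psi|\partial\psi\rangle-|\langle\psi|\partial\psi\rangle|^2)$ with respect to $\gamma$ (at fixed $\Phi$)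 and $\Phi$ (at fixed $\gamma$), respectively. *)

theory Defs
  imports "HOL-Analysis.Analysis"
begin

text \<open>Finite-dimensional complex linear algebra on an explicit finite index set I.
  Matrices and vectors are functions on an index type; only entries indexed by I matter.\<close>

type_synonym 'a cmat = "'a \<Rightarrow> 'a \<Rightarrow> complex"
type_synonym 'a cvec = "'a \<Rightarrow> complex"

definition mmul :: "'a set \<Rightarrow> 'a cmat \<Rightarrow> 'a cmat \<Rightarrow> 'a cmat" where
  "mmul I A B = (\<lambda>i j. \<Sum>k\<in>I. A i k * B k j)"

definition mvec :: "'a set \<Rightarrow> 'a cmat \<Rightarrow> 'a cvec \<Rightarrow> 'a cvec" where
  "mvec I A v = (\<lambda>i. \<Sum>k\<in>I. A i k * v k)"

definition mid :: "'a cmat" where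
  "mid = (\<lambda>i j. if i = j then 1 else 0)"

fun mpow :: "'a set \<Rightarrow> 'a cmat \<Rightarrow> nat \<Rightarrow> 'a cmat" where
  "mpow I A 0 = mid"
| "mpow I A (Suc k) = mmul I A (mpow I A k)"

definition mexp :: "'a set \<Rightarrow> 'a cmat \<Rightarrow> 'a cmat" where
  "mexp I A = (\<lambda>i j. \<Sum>k. mpow I A k i j / of_nat (fact k))"

definition mscale :: "complex \<Rightarrow> 'a cmat \<Rightarrow> 'a cmat" where
  "mscale c A = (\<lambda>i j. c * A i j)"

definition tensor :: "'a cmat \<Rightarrow> 'b cmat \<Rightarrow> ('a \<times> 'b) cmat" where
  "tensor A B = (\<lambda>(i1, i2) (j1, j2). A i1 j1 * B i2 j2)"

definition cinner :: "'a set \<Rightarrow> 'a cvec \<Rightarrow> 'a cvec \<Rightarrow> complex" where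
  "cinner I u v = (\<Sum>i\<in>I. cnj (u i) * v i)"

text \<open>Spin S = n/2 (n = 2S \<ge> 1). Basis |S,M\<rangle> indexed by j \<in> {0..n}, with M = j - n/2.\<close>

definition spin_S :: "nat \<Rightarrow> real" where
  "spin_S n = real n / 2"

definition spin_M :: "nat \<Rightarrow> nat \<Rightarrow> real" where
  "spin_M n j = real j - real n / 2"

definition spin_idx :: "nat \<Rightarrow> nat set" where
  "spin_idx n = {0..n}"

definition Splus :: "nat \<Rightarrow> nat cmat" where
  "Splus n = (\<lambda>i j. if i = Suc j \<and> i \<le> n
      then complex_of_real (sqrt (spin_S n * (spin_S n + 1) - spin_M n j * (spin_M n j + 1)))
      else 0)"

definition Sminus :: "nat \<Rightarrow> nat cmat" where
  "Sminus n = (\<lambda>i j. cnj (Splus n j i))"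

definition Sx :: "nat \<Rightarrow> nat cmat" where
  "Sx n = (\<lambda>i j. (Splus n i j + Sminus n i j) / 2)"

definition Sy :: "nat \<Rightarrow> nat cmat" where
  "Sy n = (\<lambda>i j. (Splus n i j - Sminus n i j) / (2 * \<i>))"

definition Sz :: "nat \<Rightarrow> nat cmat" where
  "Sz n = (\<lambda>i j. if i = j \<and> j \<le> n then complex_of_real (spin_M n j) else 0)"

definition SPhi :: "nat \<Rightarrow> real \<Rightarrow> nat cmat" where
  "SPhi n \<Phi> = (\<lambda>i j. complex_of_real (cos \<Phi>) * Sx n i j + complex_of_real (sin \<Phi>) * Sy n i j)"

text \<open>Spin coherent state |S,S\<rangle>_{\<theta>,\<phi>}; component at M = j - S (so S+M = j, S-M = n-j).\<close>
definition coherent :: "nat \<Rightarrow> real \<Rightarrow> real \<Rightarrow> nat cvec" where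
  "coherent n \<theta> \<phi> = (\<lambda>j. if j \<le> n then
      complex_of_real (sqrt (real (n choose j)) * cos (\<theta>/2) ^ j * sin (\<theta>/2) ^ (n - j))
      * exp (\<i> * complex_of_real (real (n - j) * \<phi>))
    else 0)"

definition two_idx :: "nat \<Rightarrow> nat \<Rightarrow> (nat \<times> nat) set" where
  "two_idx nM nP = spin_idx nM \<times> spin_idx nP"

definition SRU2 :: "nat \<Rightarrow> nat \<Rightarrow> real \<Rightarrow> real \<Rightarrow> real \<Rightarrow> (nat \<times> nat) cvec" where
  "SRU2 nM nP \<gamma> \<Phi> \<mu> =
    (let I = two_idx nM nP;
         ZZ = tensor (Sz nM) (Sz nP);
         U1 = mexp I (mscale (- \<i> * complex_of_real \<mu>) ZZ);
         U2 = mexp I (mscale (\<i> * complex_of_real \<mu>) ZZ);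
         G = tensor (mexp (spin_idx nM) (mscale (\<i> * complex_of_real \<gamma>) (SPhi nM \<Phi>))) mid;
         psi0 = (\<lambda>(j, k). coherent nM (pi/2) 0 j * coherent nP (pi/2) 0 k)
     in mvec I U1 (mvec I G (mvec I U2 psi0)))"

definition qfi :: "'a set \<Rightarrow> (real \<Rightarrow> 'a cvec) \<Rightarrow> real \<Rightarrow> real" where
  "qfi I \<psi> t =
    (let d\<psi> = (\<lambda>i. vector_derivative (\<lambda>s. \<psi> s i) (at t))
     in 4 * (Re (cinner I d\<psi> d\<psi>) - (cmod (cinner I (\<psi> t) d\<psi>))\<^sup>2))"

end

theory Submission
  imports Defs
begin

text \<open>
  Since \<open>exp(i\<mu> S\<^sub>z\<otimes>S\<^sub>z)\<close> is diagonal, conditioning on the probe level \<open>k\<close> (eigenvalue \<open>M\<^sub>k\<close> of the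
  probe's \<open>S\<^sub>z\<close>, binomial weight \<open>(n\<^sub>P choose k) / 2^n\<^sub>P\<close>) leaves the main spin in the
  equatorial coherent state of azimuth \<open>\<theta>\<^sub>k = \<Phi> + \<mu> M\<^sub>k\<close>, rotated by \<open>exp(i\<gamma> S(\<Phi>))\<close>, which is
  \<open>exp(i\<gamma> S\<^sub>x)\<close> conjugated by diagonal phases. The \<open>\<gamma>\<close>-derivative brings down \<open>S\<^sub>x\<close>. The
  \<open>\<Phi>\<close>-derivative brings down \<open>S\<^sub>z\<close> on both sides of \<open>exp(i\<pi>/2 S\<^sub>x)\<close>, which conjugates \<open>S\<^sub>z\<close>
  into \<open>-S\<^sub>y\<close>; so at \<open>\<gamma> = \<pi>/2\<close> it brings down \<open>S\<^sub>y + S\<^sub>z\<close>. Both Fisher informations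
  are therefore binomial averages over \<open>k\<close> of first and second moments in equatorial
  coherent states. The second moments of \<open>S\<^sub>x\<close> and \<open>S\<^sub>y + S\<^sub>z\<close> add up to a constant; the
  first moments \<open>S cos \<theta>\<^sub>k\<close> and \<open>-S sin \<theta>\<^sub>k\<close> average to \<open>S cos \<Phi> c\<close> and \<open>-S sin \<Phi> c\<close> with
  \<open>c = cos(\<mu>/2)^n\<^sub>P\<close>, the characteristic function of the binomial law, so their squares
  add up to \<open>S\<^sup>2 c\<^sup>2\<close> whatever \<open>\<Phi>\<close> is. At \<open>\<mu> = \<pi>\<close> the first moments vanish and \<open>I\<^sub>\<Phi>\<close> is
  \<open>4S\<^sup>2 + 2S\<close> minus a nonnegative multiple of \<open>1 + (-1)^n\<^sub>P cos 2\<Phi>\<close>.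
\<close>

section \<open>Finite matrices\<close>

lemma mmul_assoc: "finite I \<Longrightarrow> mmul I (mmul I A B) C = mmul I A (mmul I B C)"
  unfolding mmul_def
  by (auto intro!: ext simp: sum_distrib_left sum_distrib_right mult.assoc intro: sum.swap)

lemma mid_mmul: "finite I \<Longrightarrow> i \<in> I \<Longrightarrow> mmul I mid A i j = A i j"
  unfolding mmul_def mid_def by (simp add: if_distrib[of "\<lambda>x. x * _"] cong: if_cong)

lemma mmul_mid:
  assumes "finite I" "j \<in> I"
  shows "mmul I A mid i j = A i j"
proof -
  have eq: "(\<lambda>k. A i k * (if k = j then 1 else 0)) = (\<lambda>k. if k = j then A i j else 0)" by auto
  show ?thesis unfolding mmul_def mid_def eq using assms by simp
qed

lemma mvec_mmul: "finite I \<Longrightarrow> mvec I (mmul I A B) v = mvec I A (mvec I B v)"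
  unfolding mvec_def mmul_def
  by (auto intro!: ext simp: sum_distrib_left sum_distrib_right mult.assoc intro: sum.swap)

lemma mmul_as_mvec: "mmul I A X i j = mvec I A (\<lambda>l. X l j) i"
  unfolding mmul_def mvec_def ..

lemma mmul_add_left: "mmul I (\<lambda>i j. A i j + B i j) X = (\<lambda>i j. mmul I A X i j + mmul I B X i j)"
  unfolding mmul_def by (auto intro!: ext simp: distrib_right sum.distrib)

lemma mmul_diff_left: "mmul I (\<lambda>i j. A i j - B i j) X = (\<lambda>i j. mmul I A X i j - mmul I B X i j)"
  unfolding mmul_def by (auto intro!: ext simp: left_diff_distrib sum_subtractf)

lemma mmul_divide_left: "mmul I (\<lambda>i j. A i j / c) X = (\<lambda>i j. mmul I A X i j / c)"
  unfolding mmul_def by (auto intro!: ext simp: sum_divide_distrib)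

lemma cinner_add_left: "cinner I (\<lambda>j. x j + y j) z = cinner I x z + cinner I y z"
  unfolding cinner_def by (simp add: distrib_right sum.distrib)

lemma cinner_add_right: "cinner I z (\<lambda>j. x j + y j) = cinner I z x + cinner I z y"
  unfolding cinner_def by (simp add: distrib_left sum.distrib)

lemma cinner_scale_left: "cinner I (\<lambda>j. c * x j) z = cnj c * cinner I x z"
  unfolding cinner_def by (simp add: sum_distrib_left mult.assoc)

lemma cinner_scale_right: "cinner I z (\<lambda>j. c * x j) = c * cinner I z x"
  unfolding cinner_def by (simp add: sum_distrib_left mult_ac)

lemma cinner_commute: "cinner I x y = cnj (cinner I y x)"
  unfolding cinner_def by (simp add: mult.commute)

definition unitary_on :: "'a set \<Rightarrow> 'a cmat \<Rightarrow> bool" where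
  "unitary_on I E \<longleftrightarrow> (\<forall>l\<in>I. \<forall>p\<in>I. (\<Sum>j\<in>I. cnj (E j l) * E j p) = mid l p)"

lemma cinner_unitary:
  assumes fin: "finite I" and U: "unitary_on I E"
  shows "cinner I (mvec I E x) (mvec I E y) = cinner I x y"
proof -
  have "cinner I (mvec I E x) (mvec I E y) = (\<Sum>j\<in>I. \<Sum>l\<in>I. \<Sum>p\<in>I. cnj (E j l * x l) * (E j p * y p))"
    unfolding cinner_def mvec_def by (simp only: cnj_sum sum_product)
  also have "\<dots> = (\<Sum>l\<in>I. \<Sum>j\<in>I. \<Sum>p\<in>I. cnj (E j l * x l) * (E j p * y p))"
    by (rule sum.swap)
  also have "\<dots> = (\<Sum>l\<in>I. \<Sum>p\<in>I. \<Sum>j\<in>I. cnj (E j l * x l) * (E j p * y p))"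
    by (rule sum.cong[OF refl], rule sum.swap)
  also have "\<dots> = (\<Sum>l\<in>I. \<Sum>p\<in>I. cnj (x l) * y p * (\<Sum>j\<in>I. cnj (E j l) * E j p))"
    by (intro sum.cong refl) (simp add: sum_distrib_left mult_ac)
  also have "\<dots> = (\<Sum>l\<in>I. \<Sum>p\<in>I. if p = l then cnj (x l) * y l else 0)"
    using U by (intro sum.cong refl) (auto simp: unitary_on_def mid_def)
  also have "\<dots> = cinner I x y" unfolding cinner_def using fin by simp
  finally show ?thesis .
qed

section \<open>The matrix exponential\<close>

lemma mpow_scale: "mpow I (mscale c A) k = mscale (c ^ k) (mpow I A k)"
  by (induction k) (auto simp: mscale_def mmul_def mid_def sum_distrib_left mult_ac intro!: ext)

lemma mpow_commute:
  assumes "finite I" "i \<in> I" "j \<in> I"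
  shows "mmul I (mpow I A k) A i j = mpow I A (Suc k) i j"
  using assms(2,3)
proof (induction k arbitrary: i j)
  case 0
  then show ?case using assms(1) by (simp add: mid_mmul mmul_mid)
next
  case (Suc k)
  have "mmul I (mpow I A (Suc k)) A i j = mmul I A (mmul I (mpow I A k) A) i j"
    using assms(1) by (simp add: mmul_assoc)
  also have "\<dots> = mmul I A (mpow I A (Suc k)) i j"
  proof -
    have "\<And>l. l \<in> I \<Longrightarrow> mmul I (mpow I A k) A l j = mpow I A (Suc k) l j"
      using Suc.IH Suc.prems(2) by blast
    then show ?thesis unfolding mmul_def[of I A "mmul I (mpow I A k) A"] mmul_def[of I A "mpow I A (Suc k)"]
      by (intro sum.cong) auto
  qed
  finally show ?case by simp
qed

definition entry_norm_sum :: "'a set \<Rightarrow> 'a cmat \<Rightarrow> real" where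
  "entry_norm_sum I A = (\<Sum>i\<in>I. \<Sum>l\<in>I. cmod (A i l))"

lemma norm_entry_le_entry_norm_sum:
  assumes f: "finite I" and il: "i \<in> I" "l \<in> I"
  shows "cmod (A i l) \<le> entry_norm_sum I A"
proof -
  have "cmod (A i l) \<le> (\<Sum>l\<in>I. cmod (A i l))"
    using f il by (intro member_le_sum) auto
  also have "\<dots> \<le> entry_norm_sum I A" unfolding entry_norm_sum_def
    using f il by (intro member_le_sum[of i I "\<lambda>i. \<Sum>l\<in>I. cmod (A i l)"]) (auto intro: sum_nonneg)
  finally show ?thesis .
qed

lemma entry_norm_sum_nonneg: "0 \<le> entry_norm_sum I A"
  unfolding entry_norm_sum_def by (intro sum_nonneg) auto

lemma norm_mpow_le:
  assumes "finite I" "i \<in> I"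
  shows "cmod (mpow I A k i j) \<le> (real (card I) * entry_norm_sum I A) ^ k"
  using assms(2)
proof (induction k arbitrary: i)
  case 0
  then show ?case by (simp add: mid_def)
next
  case (Suc k)
  have "cmod (mpow I A (Suc k) i j) \<le> (\<Sum>l\<in>I. cmod (A i l) * cmod (mpow I A k l j))"
    by (simp add: mmul_def norm_mult[symmetric] sum_norm_le)
  also have "\<dots> \<le> (\<Sum>l\<in>I. entry_norm_sum I A * (real (card I) * entry_norm_sum I A) ^ k)"
    using Suc assms(1) by (intro sum_mono mult_mono norm_entry_le_entry_norm_sum) (auto intro: entry_norm_sum_nonneg)
  also have "\<dots> = (real (card I) * entry_norm_sum I A) ^ Suc k" by simp
  finally show ?case .
qed

definition mexp_coeff :: "'a set \<Rightarrow> 'a cmat \<Rightarrow> 'a \<Rightarrow> 'a \<Rightarrow> nat \<Rightarrow> complex" where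
  "mexp_coeff I A i j k = mpow I A k i j / of_nat (fact k)"

lemma mexp_mscale_series: "mexp I (mscale z A) i j = (\<Sum>k. mexp_coeff I A i j k * z ^ k)"
  unfolding mexp_def mexp_coeff_def mpow_scale by (simp add: mscale_def mult_ac)

lemma summable_mexp_coeff:
  assumes "finite I" "i \<in> I"
  shows "summable (\<lambda>k. mexp_coeff I A i j k * z ^ k)"
proof (rule summable_comparison_test')
  let ?C = "real (card I) * entry_norm_sum I A * cmod z"
  show "summable (\<lambda>k. inverse (fact k) * ?C ^ k)" by (rule summable_exp)
  fix k :: nat
  have "norm (mexp_coeff I A i j k * z ^ k) = cmod (mpow I A k i j) * cmod z ^ k / fact k"
    unfolding mexp_coeff_def by (simp add: norm_mult norm_divide norm_power)
  also have "\<dots> \<le> (real (card I) * entry_norm_sum I A) ^ k * cmod z ^ k / fact k"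
    using norm_mpow_le[OF assms] by (intro divide_right_mono mult_right_mono) auto
  also have "\<dots> = inverse (fact k) * ?C ^ k" by (simp add: power_mult_distrib field_simps)
  finally show "norm (mexp_coeff I A i j k * z ^ k) \<le> inverse (fact k) * ?C ^ k" .
qed

lemma diffs_mexp_coeff: "diffs (mexp_coeff I A i j) k = mpow I A (Suc k) i j / of_nat (fact k)"
proof -
  have nz: "(of_nat (fact k) :: complex) \<noteq> 0" by simp
  have c: "(of_nat (Suc k) :: complex) \<noteq> 0" by (simp del: of_nat_Suc)
  have "diffs (mexp_coeff I A i j) k = of_nat (Suc k) * (mpow I A (Suc k) i j / (of_nat (Suc k) * of_nat (fact k)))"
    unfolding diffs_def mexp_coeff_def by (simp only: fact_Suc of_nat_mult of_nat_id)
  also have "\<dots> = mpow I A (Suc k) i j / of_nat (fact k)"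
    by (simp only: times_divide_eq_right) (rule mult_divide_mult_cancel_left[OF c])
  finally show ?thesis .
qed

lemma mmul_mexp_eq_diffs_series:
  assumes "finite I" "i \<in> I"
  shows "mmul I A (mexp I (mscale z A)) i j = (\<Sum>k. diffs (mexp_coeff I A i j) k * z ^ k)"
proof -
  have "mmul I A (mexp I (mscale z A)) i j = (\<Sum>l\<in>I. A i l * (\<Sum>k. mexp_coeff I A l j k * z ^ k))"
    unfolding mmul_def mexp_mscale_series ..
  also have "\<dots> = (\<Sum>l\<in>I. \<Sum>k. A i l * (mexp_coeff I A l j k * z ^ k))"
    using summable_mexp_coeff[OF assms(1)] by (intro sum.cong refl suminf_mult[symmetric]) auto
  also have "\<dots> = (\<Sum>k. \<Sum>l\<in>I. A i l * (mexp_coeff I A l j k * z ^ k))"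
    using summable_mexp_coeff[OF assms(1)] by (intro suminf_sum[symmetric] summable_mult) auto
  also have "\<dots> = (\<Sum>k. diffs (mexp_coeff I A i j) k * z ^ k)"
    unfolding diffs_mexp_coeff by (simp add: mexp_coeff_def mmul_def sum_distrib_left sum_divide_distrib mult_ac)
  finally show ?thesis .
qed

lemma mmul_mexp_right_eq_diffs_series:
  assumes "finite I" "i \<in> I" "j \<in> I"
  shows "mmul I (mexp I (mscale z A)) A i j = (\<Sum>k. diffs (mexp_coeff I A i j) k * z ^ k)"
proof -
  have "mmul I (mexp I (mscale z A)) A i j = (\<Sum>l\<in>I. (\<Sum>k. mexp_coeff I A i l k * z ^ k) * A l j)"
    unfolding mmul_def mexp_mscale_series ..
  also have "\<dots> = (\<Sum>l\<in>I. \<Sum>k. mexp_coeff I A i l k * z ^ k * A l j)"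
    by (intro sum.cong refl) (rule suminf_mult2, rule summable_mexp_coeff[OF assms(1,2)])
  also have "\<dots> = (\<Sum>k. \<Sum>l\<in>I. mexp_coeff I A i l k * z ^ k * A l j)"
    using summable_mexp_coeff[OF assms(1,2)] by (intro suminf_sum[symmetric] summable_mult2) auto
  also have "\<dots> = (\<Sum>k. diffs (mexp_coeff I A i j) k * z ^ k)"
    unfolding diffs_mexp_coeff mpow_commute[OF assms, symmetric]
    by (simp add: mexp_coeff_def mmul_def sum_distrib_left sum_divide_distrib mult_ac)
  finally show ?thesis .
qed

lemma mexp_mmul_commute:
  assumes "finite I" "i \<in> I" "j \<in> I"
  shows "mmul I A (mexp I (mscale z A)) i j = mmul I (mexp I (mscale z A)) A i j"
  using mmul_mexp_eq_diffs_series[OF assms(1,2)] mmul_mexp_right_eq_diffs_series[OF assms] by simp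

lemma has_field_derivative_mexp:
  assumes "finite I" "i \<in> I"
  shows "((\<lambda>z. mexp I (mscale z A) i j) has_field_derivative mmul I A (mexp I (mscale z A)) i j) (at z)"
  unfolding mexp_mscale_series mmul_mexp_eq_diffs_series[OF assms]
  by (rule termdiffs_strong_converges_everywhere) (rule summable_mexp_coeff[OF assms])

lemma mexp_mscale_0: "mexp I (mscale 0 A) i j = mid i j"
proof -
  have "mexp I (mscale 0 A) i j = (\<Sum>k. mexp_coeff I A i j k * 0 ^ k)" by (rule mexp_mscale_series)
  also have "\<dots> = mexp_coeff I A i j 0" by (rule powser_zero)
  finally show ?thesis by (simp add: mexp_coeff_def)
qed

lemma has_field_derivative_mmul:
  assumes "finite I"
    and "\<And>l. l \<in> I \<Longrightarrow> ((\<lambda>z. X z i l) has_field_derivative X' l) (at z)"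
    and "\<And>l. l \<in> I \<Longrightarrow> ((\<lambda>z. Y z l j) has_field_derivative Y' l) (at z)"
  shows "((\<lambda>z. mmul I (X z) (Y z) i j) has_field_derivative (\<Sum>l\<in>I. X' l * Y z l j + X z i l * Y' l)) (at z)"
  unfolding mmul_def
  by (rule DERIV_sum) (rule DERIV_cong[OF DERIV_mult[OF assms(2) assms(3)]], auto simp: mult_ac)

lemma has_field_derivative_mexp_right:
  assumes "finite I" "i \<in> I" "j \<in> I"
  shows "((\<lambda>z. mexp I (mscale z A) i j) has_field_derivative mmul I (mexp I (mscale z A)) A i j) (at z)"
  using has_field_derivative_mexp[OF assms(1,2), where A=A and j=j and z=z] mexp_mmul_commute[OF assms, where A=A and z=z] by simp

lemma has_field_derivative_mexp_neg:
  assumes "finite I" "i \<in> I"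
  shows "((\<lambda>z. mexp I (mscale (-z) A) i j) has_field_derivative - mmul I A (mexp I (mscale (-z) A)) i j) (at z)"
  using DERIV_chain2[OF has_field_derivative_mexp[OF assms, where A=A and j=j and z="-z"] DERIV_minus[OF DERIV_ident]] by simp

lemma has_field_derivative_mexp_neg_right:
  assumes "finite I" "i \<in> I" "j \<in> I"
  shows "((\<lambda>z. mexp I (mscale (-z) A) i j) has_field_derivative - mmul I (mexp I (mscale (-z) A)) A i j) (at z)"
  using has_field_derivative_mexp_neg[OF assms(1,2), where A=A and j=j and z=z] mexp_mmul_commute[OF assms, where A=A and z="-z"] by simp

lemma constant_if_deriv_zero:
  fixes f :: "complex \<Rightarrow> complex"
  assumes "\<And>z. (f has_field_derivative 0) (at z)"
  shows "f z = f 0"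
proof -
  obtain c where "\<forall>x\<in>UNIV. f x = c"
    using has_field_derivative_zero_constant[of UNIV f] assms by auto
  then show ?thesis by simp
qed

lemma mexp_mscale_inverse:
  assumes "finite I" "i \<in> I" "j \<in> I"
  shows "mmul I (mexp I (mscale (-z) A)) (mexp I (mscale z A)) i j = mid i j"
proof -
  let ?F = "\<lambda>z. mmul I (mexp I (mscale (-z) A)) (mexp I (mscale z A)) i j"
  have "(?F has_field_derivative 0) (at w)" for w
  proof -
    have "(?F has_field_derivative (\<Sum>l\<in>I. (- mmul I (mexp I (mscale (-w) A)) A i l) * mexp I (mscale w A) l j
              + mexp I (mscale (-w) A) i l * mmul I A (mexp I (mscale w A)) l j)) (at w)"
      by (rule has_field_derivative_mmul[OF assms(1)], rule has_field_derivative_mexp_neg_right[OF assms(1,2)], simp, rule has_field_derivative_mexp[OF assms(1)])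
    moreover have "(\<Sum>l\<in>I. (- mmul I (mexp I (mscale (-w) A)) A i l) * mexp I (mscale w A) l j
              + mexp I (mscale (-w) A) i l * mmul I A (mexp I (mscale w A)) l j) = 
          - mmul I (mmul I (mexp I (mscale (-w) A)) A) (mexp I (mscale w A)) i j
          + mmul I (mexp I (mscale (-w) A)) (mmul I A (mexp I (mscale w A))) i j"
      unfolding mmul_def by (simp add: sum.distrib sum_negf sum_subtractf)
    moreover have "\<dots> = 0" by (simp add: mmul_assoc[OF assms(1)])
    ultimately show ?thesis by simp
  qed
  then have "?F z = ?F 0" by (rule constant_if_deriv_zero)
  also have "\<dots> = mmul I mid mid i j"
    unfolding mmul_def by (simp add: mexp_mscale_0)
  also have "\<dots> = mid i j" by (rule mid_mmul[OF assms(1,2)])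
  finally show ?thesis .
qed

lemma linear_ode_zero_unique:
  assumes fin: "finite I"
    and D: "\<And>z i j. i \<in> I \<Longrightarrow> j \<in> I \<Longrightarrow> ((\<lambda>z. W z i j) has_field_derivative mmul I (W z) A i j) (at z)"
    and W0: "\<And>i j. i \<in> I \<Longrightarrow> j \<in> I \<Longrightarrow> W 0 i j = 0"
    and ij: "i \<in> I" "j \<in> I"
  shows "W z i j = 0"
proof -
  let ?e = "\<lambda>z. mexp I (mscale z A)"
  let ?V = "\<lambda>z i j. mmul I (W z) (?e (-z)) i j"
  have V0: "?V z i j = 0" if i: "i \<in> I" and j: "j \<in> I" for z i j
  proof -
    have "((\<lambda>z. ?V z i j) has_field_derivative 0) (at w)" for w
    proof -
      have "((\<lambda>z. ?V z i j) has_field_derivative (\<Sum>l\<in>I. mmul I (W w) A i l * ?e (-w) l j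
              + W w i l * (- mmul I A (?e (-w)) l j))) (at w)"
        by (rule has_field_derivative_mmul[OF fin], rule D[OF i], simp, rule has_field_derivative_mexp_neg[OF fin])
      moreover have "(\<Sum>l\<in>I. mmul I (W w) A i l * ?e (-w) l j + W w i l * (- mmul I A (?e (-w)) l j))
          = mmul I (mmul I (W w) A) (?e (-w)) i j - mmul I (W w) (mmul I A (?e (-w))) i j"
        unfolding mmul_def by (simp add: sum.distrib sum_negf sum_subtractf)
      moreover have "\<dots> = 0" by (simp add: mmul_assoc[OF fin])
      ultimately show ?thesis by simp
    qed
    then have "?V z i j = ?V 0 i j" by (rule constant_if_deriv_zero)
    also have "\<dots> = 0" unfolding mmul_def using W0[OF i] by simp
    finally show ?thesis .
  qed
  have "W z i j = mmul I (W z) mid i j" using mmul_mid[OF fin ij(2)] by simp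
  also have "\<dots> = mmul I (W z) (mmul I (?e (-z)) (?e z)) i j"
    unfolding mmul_def[of I "W z"] using mexp_mscale_inverse[OF fin _ ij(2)] by (intro sum.cong) auto
  also have "\<dots> = mmul I (mmul I (W z) (?e (-z))) (?e z) i j" by (simp add: mmul_assoc[OF fin])
  also have "\<dots> = 0" unfolding mmul_def[of I "mmul I _ _"] using V0[OF ij(1)] by simp
  finally show ?thesis .
qed

section \<open>Spin operators\<close>

definition ladder :: "nat \<Rightarrow> nat \<Rightarrow> real" where
  "ladder n j = sqrt (real (n - j) * real (Suc j))"

lemma ladder_sq: "ladder n j * ladder n j = real (n - j) * real (Suc j)"
  unfolding ladder_def by simp

lemma Splus_eq: "Splus n i j = (if i = Suc j \<and> i \<le> n then complex_of_real (ladder n j) else 0)"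
proof (cases "i = Suc j \<and> i \<le> n")
  case True
  then have jn: "j < n" by simp
  have "spin_S n * (spin_S n + 1) - spin_M n j * (spin_M n j + 1) = real (n - j) * real (Suc j)"
    using jn unfolding spin_S_def spin_M_def by (simp add: of_nat_diff algebra_simps power2_eq_square field_simps)
  then show ?thesis using True unfolding Splus_def ladder_def by simp
next
  case False
  then show ?thesis unfolding Splus_def by (simp only: if_not_P[OF False] if_False)
qed

lemma Sminus_eq: "Sminus n i j = (if j = Suc i \<and> j \<le> n then complex_of_real (ladder n i) else 0)"
  unfolding Sminus_def Splus_eq by simp

lemma sum_atLeastAtMost_delta: fixes k n :: nat shows "(\<Sum>l\<in>{0..n}. if l = k then f l else 0) = (if k \<le> n then f k else (0::complex))"
  using sum.delta[OF finite_atLeastAtMost, of k f 0 n] by simp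

lemma mvec_Splus: fixes u :: "nat \<Rightarrow> complex" shows "mvec {0..n} (Splus n) u j = (if 0 < j \<and> j \<le> n then ladder n (j - 1) * u (j - 1) else 0)"
proof -
  have "mvec {0..n} (Splus n) u j = (\<Sum>l\<in>{0..n}. if l = j - 1 then (if 0 < j \<and> j \<le> n then ladder n (j - 1) * u (j - 1) else 0) else 0)"
    unfolding mvec_def Splus_eq by (intro sum.cong) auto
  also have "\<dots> = (if 0 < j \<and> j \<le> n then ladder n (j - 1) * u (j - 1) else 0)"
    by (subst sum_atLeastAtMost_delta) auto
  finally show ?thesis .
qed

lemma mvec_Sminus: fixes u :: "nat \<Rightarrow> complex" shows "mvec {0..n} (Sminus n) u j = (if j < n then ladder n j * u (Suc j) else 0)"
proof -
  have "mvec {0..n} (Sminus n) u j = (\<Sum>l\<in>{0..n}. if l = Suc j then (if j < n then ladder n j * u (Suc j) else 0) else 0)"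
    unfolding mvec_def Sminus_eq by (intro sum.cong) auto
  also have "\<dots> = (if j < n then ladder n j * u (Suc j) else 0)"
    by (subst sum_atLeastAtMost_delta) auto
  finally show ?thesis .
qed

lemma mvec_Sz: fixes u :: "nat \<Rightarrow> complex" shows "mvec {0..n} (Sz n) u j = (if j \<le> n then complex_of_real (spin_M n j) * u j else 0)"
proof -
  have "mvec {0..n} (Sz n) u j = (\<Sum>l\<in>{0..n}. if l = j then (if j \<le> n then complex_of_real (spin_M n j) * u j else 0) else 0)"
    unfolding mvec_def Sz_def by (intro sum.cong) auto
  also have "\<dots> = (if j \<le> n then complex_of_real (spin_M n j) * u j else 0)"
    by (subst sum_atLeastAtMost_delta) auto
  finally show ?thesis .
qed

lemma mmul_Sz_right: fixes X :: "nat cmat" shows "mmul {0..n} X (Sz n) i j = (if j \<le> n then X i j * complex_of_real (spin_M n j) else 0)"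
proof -
  have "mmul {0..n} X (Sz n) i j = (\<Sum>l\<in>{0..n}. if l = j then (if j \<le> n then X i j * complex_of_real (spin_M n j) else 0) else 0)"
    unfolding mmul_def Sz_def by (intro sum.cong) auto
  also have "\<dots> = (if j \<le> n then X i j * complex_of_real (spin_M n j) else 0)"
    by (subst sum_atLeastAtMost_delta) auto
  finally show ?thesis .
qed

lemma mmul_Sx_left: fixes X :: "nat cmat" shows "mmul {0..n} (Sx n) X i j =
   ((if 0 < i \<and> i \<le> n then ladder n (i - 1) * X (i - 1) j else 0) + (if i < n then ladder n i * X (Suc i) j else 0)) / 2"
  unfolding Sx_def mmul_divide_left mmul_add_left mmul_as_mvec[of _ "Splus n"] mmul_as_mvec[of _ "Sminus n"]
    mvec_Splus mvec_Sminus ..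

lemma mmul_Sy_left: fixes X :: "nat cmat" shows "mmul {0..n} (Sy n) X i j =
   ((if 0 < i \<and> i \<le> n then ladder n (i - 1) * X (i - 1) j else 0) - (if i < n then ladder n i * X (Suc i) j else 0)) / (2 * \<i>)"
  unfolding Sy_def mmul_divide_left mmul_diff_left mmul_as_mvec[of _ "Splus n"] mmul_as_mvec[of _ "Sminus n"]
    mvec_Splus mvec_Sminus ..

lemma mmul_Sz_left: fixes X :: "nat cmat" shows "mmul {0..n} (Sz n) X i j = (if i \<le> n then complex_of_real (spin_M n i) * X i j else 0)"
  unfolding mmul_as_mvec[of _ "Sz n"] mvec_Sz ..

lemma Sx_Sz_commutator:
  assumes "i \<le> n" "j \<le> n"
  shows "mmul {0..n} (Sx n) (Sz n) i j - mmul {0..n} (Sz n) (Sx n) i j = - \<i> * Sy n i j"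
  using assms
  unfolding mmul_Sz_right mmul_Sz_left Sx_def Sy_def Splus_eq Sminus_eq
  by (auto simp: spin_M_def field_simps)

lemma Sx_Sy_commutator:
  assumes "i \<le> n" "j \<le> n"
  shows "mmul {0..n} (Sx n) (Sy n) i j - mmul {0..n} (Sy n) (Sx n) i j = \<i> * Sz n i j"
proof -
  have pq: "complex_of_real (ladder n k) * complex_of_real (ladder n k) = of_nat (n - k) * of_nat (Suc k)" for k
    by (metis of_real_mult ladder_sq of_real_of_nat_eq)
  show ?thesis
    using assms unfolding mmul_Sx_left mmul_Sy_left
    by (auto simp: Sx_def Sy_def Sz_def Splus_eq Sminus_eq spin_M_def field_simps pq)
qed

section \<open>Rotation about the x axis\<close>

definition gen_x :: "nat \<Rightarrow> nat cmat" where "gen_x n = mscale \<i> (Sx n)"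
definition rot_x :: "nat \<Rightarrow> complex \<Rightarrow> nat cmat" where "rot_x n z = mexp {0..n} (mscale z (gen_x n))"

definition rot_Sz :: "nat \<Rightarrow> complex \<Rightarrow> nat cmat" where
  "rot_Sz n z = (\<lambda>a b. cos z * Sz n a b - sin z * Sy n a b)"
definition rot_Sz_deriv :: "nat \<Rightarrow> complex \<Rightarrow> nat cmat" where
  "rot_Sz_deriv n z = (\<lambda>a b. - sin z * Sz n a b - cos z * Sy n a b)"

lemma has_field_derivative_rot_Sz: "((\<lambda>z. rot_Sz n z a b) has_field_derivative rot_Sz_deriv n z a b) (at z)"
  unfolding rot_Sz_def rot_Sz_deriv_def by (auto intro!: derivative_eq_intros)

lemma rot_Sz_commutator:
  assumes "l \<le> n" "j \<le> n"
  shows "mmul {0..n} (gen_x n) (rot_Sz n z) l j + rot_Sz_deriv n z l j = mmul {0..n} (rot_Sz n z) (gen_x n) l j"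
proof -
  have e1: "mmul {0..n} (gen_x n) (rot_Sz n z) l j = \<i> * cos z * mmul {0..n} (Sx n) (Sz n) l j - \<i> * sin z * mmul {0..n} (Sx n) (Sy n) l j"
    unfolding mmul_def gen_x_def rot_Sz_def mscale_def by (simp add: sum_distrib_left sum_subtractf algebra_simps)
  have e2: "mmul {0..n} (rot_Sz n z) (gen_x n) l j = \<i> * cos z * mmul {0..n} (Sz n) (Sx n) l j - \<i> * sin z * mmul {0..n} (Sy n) (Sx n) l j"
    unfolding mmul_def gen_x_def rot_Sz_def mscale_def by (simp add: sum_distrib_left sum_subtractf algebra_simps)
  have c1: "mmul {0..n} (Sx n) (Sz n) l j = mmul {0..n} (Sz n) (Sx n) l j - \<i> * Sy n l j"
    using Sx_Sz_commutator[OF assms] by (simp add: algebra_simps)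
  have c2: "mmul {0..n} (Sx n) (Sy n) l j = mmul {0..n} (Sy n) (Sx n) l j + \<i> * Sz n l j"
    using Sx_Sy_commutator[OF assms] by (simp add: algebra_simps)
  show ?thesis unfolding e1 e2 rot_Sz_deriv_def c1 c2
    by (simp add: algebra_simps)
qed

lemma has_field_derivative_Sz_rot_x:
  assumes i: "i \<le> n" and j: "j \<le> n"
  shows "((\<lambda>z. mmul {0..n} (Sz n) (rot_x n z) i j) has_field_derivative
           mmul {0..n} (mmul {0..n} (Sz n) (rot_x n z)) (gen_x n) i j) (at z)"
proof -
  have fin: "finite {0..n}" and j': "j \<in> {0..n}" using j by simp_all
  have "((\<lambda>z. mmul {0..n} (Sz n) (rot_x n z) i j) has_field_derivative
          (\<Sum>l\<in>{0..n}. 0 * rot_x n z l j + Sz n i l * mmul {0..n} (gen_x n) (rot_x n z) l j)) (at z)"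
    by (rule has_field_derivative_mmul[OF fin]) (auto simp: rot_x_def intro: has_field_derivative_mexp)
  also have "(\<Sum>l\<in>{0..n}. 0 * rot_x n z l j + Sz n i l * mmul {0..n} (gen_x n) (rot_x n z) l j)
      = mmul {0..n} (Sz n) (mmul {0..n} (rot_x n z) (gen_x n)) i j"
    unfolding mmul_def[of "{0..n}" "Sz n"] using mexp_mmul_commute[OF fin _ j'] by (intro sum.cong) (auto simp: rot_x_def)
  finally show ?thesis by (simp add: mmul_assoc[OF fin])
qed

lemma has_field_derivative_rot_x_rot_Sz:
  assumes i: "i \<le> n" and j: "j \<le> n"
  shows "((\<lambda>z. mmul {0..n} (rot_x n z) (rot_Sz n z) i j) has_field_derivative
           mmul {0..n} (mmul {0..n} (rot_x n z) (rot_Sz n z)) (gen_x n) i j) (at z)"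
proof -
  let ?I = "{0..n}" and ?E = "rot_x n z"
  have fin: "finite ?I" by simp
  have "((\<lambda>z. mmul ?I (rot_x n z) (rot_Sz n z) i j) has_field_derivative
          (\<Sum>l\<in>?I. mmul ?I ?E (gen_x n) i l * rot_Sz n z l j + ?E i l * rot_Sz_deriv n z l j)) (at z)"
  proof (rule has_field_derivative_mmul[OF fin])
    show "((\<lambda>z. rot_x n z i l) has_field_derivative mmul ?I ?E (gen_x n) i l) (at z)" if "l \<in> ?I" for l
      unfolding rot_x_def using i that by (intro has_field_derivative_mexp_right[OF fin]) auto
  qed (rule has_field_derivative_rot_Sz)
  also have "(\<Sum>l\<in>?I. mmul ?I ?E (gen_x n) i l * rot_Sz n z l j + ?E i l * rot_Sz_deriv n z l j)
      = mmul ?I (mmul ?I ?E (gen_x n)) (rot_Sz n z) i j + mmul ?I ?E (rot_Sz_deriv n z) i j"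
    by (simp only: sum.distrib mmul_def[of ?I "mmul ?I ?E (gen_x n)" "rot_Sz n z"] mmul_def[of ?I ?E "rot_Sz_deriv n z"])
  also have "\<dots> = mmul ?I ?E (\<lambda>a b. mmul ?I (gen_x n) (rot_Sz n z) a b + rot_Sz_deriv n z a b) i j"
    unfolding mmul_assoc[OF fin] unfolding mmul_def by (simp add: sum.distrib distrib_left)
  also have "\<dots> = mmul ?I ?E (mmul ?I (rot_Sz n z) (gen_x n)) i j"
    unfolding mmul_def[of ?I ?E] using rot_Sz_commutator[of _ n _ z] j by (intro sum.cong) auto
  finally show ?thesis by (simp add: mmul_assoc[OF fin])
qed

lemma Sz_rot_x:
  assumes "i \<le> n" "j \<le> n"
  shows "mmul {0..n} (Sz n) (rot_x n z) i j = mmul {0..n} (rot_x n z) (rot_Sz n z) i j"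
proof -
  let ?I = "{0..n}"
  let ?W = "\<lambda>z i j. mmul ?I (Sz n) (rot_x n z) i j - mmul ?I (rot_x n z) (rot_Sz n z) i j"
  have fin: "finite ?I" by simp
  have D: "((\<lambda>z. ?W z i j) has_field_derivative mmul ?I (?W z) (gen_x n) i j) (at z)"
    if "i \<in> ?I" "j \<in> ?I" for z i j
    using DERIV_diff[OF has_field_derivative_Sz_rot_x has_field_derivative_rot_x_rot_Sz] that
    by (simp add: mmul_def left_diff_distrib sum_subtractf)
  have W0: "?W 0 i j = 0" if i: "i \<in> ?I" and j: "j \<in> ?I" for i j
  proof -
    have "mmul ?I (Sz n) (rot_x n 0) i j = mmul ?I (Sz n) mid i j"
      by (simp add: mmul_def mexp_mscale_0 rot_x_def)
    moreover have "mmul ?I (rot_x n 0) (rot_Sz n 0) i j = mmul ?I mid (Sz n) i j"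
      by (simp add: mmul_def mexp_mscale_0 rot_x_def rot_Sz_def)
    ultimately show ?thesis using mmul_mid[OF fin j] mid_mmul[OF fin i] by simp
  qed
  show ?thesis using linear_ode_zero_unique[where W = ?W and A = "gen_x n", OF fin D W0] assms by simp
qed

lemma Sx_symmetric: "Sx n a b = Sx n b a"
  unfolding Sx_def Splus_eq Sminus_eq by auto

lemma cnj_Sx: "cnj (Sx n a b) = Sx n a b"
  unfolding Sx_def Splus_eq Sminus_eq by auto

lemma cnj_gen_x: "cnj (gen_x n a b) = - gen_x n b a"
  unfolding gen_x_def mscale_def using cnj_Sx[of n a b] Sx_symmetric[of n a b] by simp

lemma cnj_mpow_gen_x:
  assumes "a \<in> {0..n}" "b \<in> {0..n}"
  shows "cnj (mpow {0..n} (gen_x n) k a b) = (-1) ^ k * mpow {0..n} (gen_x n) k b a"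
  using assms(1)
proof (induction k arbitrary: a)
  case 0
  then show ?case by (simp add: mid_def)
next
  case (Suc k)
  have "cnj (mpow {0..n} (gen_x n) (Suc k) a b) = (\<Sum>m\<in>{0..n}. (- gen_x n m a) * ((-1) ^ k * mpow {0..n} (gen_x n) k b m))"
    using Suc.IH by (simp add: mmul_def cnj_gen_x)
  also have "\<dots> = (-1) ^ Suc k * mmul {0..n} (mpow {0..n} (gen_x n) k) (gen_x n) b a"
    unfolding mmul_def by (simp add: sum_distrib_left algebra_simps)
  also have "\<dots> = (-1) ^ Suc k * mpow {0..n} (gen_x n) (Suc k) b a"
    using mpow_commute[of "{0..n}" b a "gen_x n" k] assms(2) Suc.prems by simp
  finally show ?case .
qed

lemma cnj_rot_x:
  assumes "a \<in> {0..n}" "b \<in> {0..n}"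
  shows "cnj (rot_x n z a b) = rot_x n (- cnj z) b a"
proof -
  have fin: "finite {0..n}" by simp
  have s: "(\<lambda>k. mexp_coeff {0..n} (gen_x n) a b k * z ^ k) sums rot_x n z a b"
    unfolding rot_x_def mexp_mscale_series using summable_mexp_coeff[OF fin assms(1)] by (rule summable_sums)
  have "(\<lambda>k. cnj (mexp_coeff {0..n} (gen_x n) a b k * z ^ k)) sums cnj (rot_x n z a b)"
    using s by (simp only: sums_cnj)
  moreover have "(\<lambda>k. cnj (mexp_coeff {0..n} (gen_x n) a b k * z ^ k)) = (\<lambda>k. mexp_coeff {0..n} (gen_x n) b a k * (- cnj z) ^ k)"
  proof
    fix k
    have "cnj (mexp_coeff {0..n} (gen_x n) a b k * z ^ k) = cnj (mpow {0..n} (gen_x n) k a b) / of_nat (fact k) * cnj z ^ k"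
      by (simp add: mexp_coeff_def)
    also have "\<dots> = ((-1) ^ k * mpow {0..n} (gen_x n) k b a) / of_nat (fact k) * cnj z ^ k"
      by (simp only: cnj_mpow_gen_x[OF assms])
    also have "\<dots> = mexp_coeff {0..n} (gen_x n) b a k * (- cnj z) ^ k"
      by (simp add: mexp_coeff_def power_minus[of "cnj z"])
    finally show "cnj (mexp_coeff {0..n} (gen_x n) a b k * z ^ k) = mexp_coeff {0..n} (gen_x n) b a k * (- cnj z) ^ k" .
  qed
  moreover have "(\<lambda>k. mexp_coeff {0..n} (gen_x n) b a k * (- cnj z) ^ k) sums rot_x n (- cnj z) b a"
    unfolding rot_x_def mexp_mscale_series using summable_mexp_coeff[OF fin assms(2)] by (rule summable_sums)
  ultimately show ?thesis using sums_unique2 by metis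
qed

lemma rot_x_unitary: "unitary_on {0..n} (rot_x n (of_real t))"
  unfolding unitary_on_def
proof (intro ballI)
  fix l m assume lm: "l \<in> {0..n}" "m \<in> {0..n}"
  have "(\<Sum>j\<in>{0..n}. cnj (rot_x n (of_real t) j l) * rot_x n (of_real t) j m)
      = mmul {0..n} (rot_x n (- of_real t)) (rot_x n (of_real t)) l m"
    unfolding mmul_def using cnj_rot_x[OF _ lm(1), of _ "of_real t"] by (intro sum.cong) auto
  also have "\<dots> = mid l m" unfolding rot_x_def by (rule mexp_mscale_inverse) (use lm in auto)
  finally show "(\<Sum>j\<in>{0..n}. cnj (rot_x n (of_real t) j l) * rot_x n (of_real t) j m) = mid l m" .
qed

lemma Sz_rot_x_quarter:
  assumes "i \<le> n" "j \<le> n"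
  shows "mmul {0..n} (Sz n) (rot_x n (of_real (pi/2))) i j = - mmul {0..n} (rot_x n (of_real (pi/2))) (Sy n) i j"
proof -
  have "mmul {0..n} (Sz n) (rot_x n (of_real (pi/2))) i j = mmul {0..n} (rot_x n (of_real (pi/2))) (rot_Sz n (of_real (pi/2))) i j"
    by (rule Sz_rot_x[OF assms])
  also have "rot_Sz n (of_real (pi/2)) = (\<lambda>a b. - Sy n a b)"
    unfolding rot_Sz_def by (simp add: cos_of_real sin_of_real)
  finally show ?thesis unfolding mmul_def by (simp add: sum_negf)
qed

section \<open>Binomial weights and equatorial coherent states\<close>

lemma sum_index_binomial: "(\<Sum>l\<le>n. real l * real (n choose l)) = real n * 2 ^ n / 2"
proof (cases n)
  case 0 then show ?thesis by simp
next
  case (Suc m)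
  have "(\<Sum>l\<le>n. real l * real (n choose l)) = real (\<Sum>l\<le>n. l * (n choose l))" by simp
  also have "\<dots> = real (n * 2 ^ (n - 1))" by (simp only: choose_linear_sum)
  also have "\<dots> = real n * 2 ^ n / 2" using Suc by (simp add: algebra_simps)
  finally show ?thesis .
qed

lemma sum_binomial: "(\<Sum>l\<le>n. real (n choose l)) = 2 ^ n"
proof -
  have "(\<Sum>l\<le>n. real (n choose l)) = real (\<Sum>l\<le>n. (n choose l))" by simp
  also have "\<dots> = 2 ^ n" by (simp only: choose_row_sum) simp
  finally show ?thesis .
qed

lemma sum_index_sq_binomial: "(\<Sum>l\<le>n. real l ^ 2 * real (n choose l)) = real n * (real n + 1) * 2 ^ n / 4"
proof (cases n)
  case 0 then show ?thesis by simp
next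
  case (Suc m)
  have "(\<Sum>l\<le>Suc m. real l ^ 2 * real (Suc m choose l)) = (\<Sum>i\<le>m. real (Suc i) ^ 2 * real (Suc m choose Suc i))"
    by (simp only: sum.atMost_Suc_shift) simp
  also have "\<dots> = (\<Sum>i\<le>m. real (Suc m) * (real i * real (m choose i) + real (m choose i)))"
  proof (intro sum.cong refl)
    fix i
    have e: "real (Suc i) * real (Suc m choose Suc i) = real (Suc m) * real (m choose i)"
      using Suc_times_binomial[of i m] by (metis of_nat_mult)
    have "real (Suc i) ^ 2 * real (Suc m choose Suc i) = real (Suc i) * (real (Suc i) * real (Suc m choose Suc i))"
      by (simp only: power2_eq_square mult.assoc)
    also have "\<dots> = real (Suc i) * (real (Suc m) * real (m choose i))" by (simp only: e)
    also have "\<dots> = real (Suc m) * (real i * real (m choose i) + real (m choose i))"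
      by (simp add: algebra_simps)
    finally show "real (Suc i) ^ 2 * real (Suc m choose Suc i) = real (Suc m) * (real i * real (m choose i) + real (m choose i))" .
  qed
  also have "\<dots> = real (Suc m) * ((\<Sum>i\<le>m. real i * real (m choose i)) + (\<Sum>i\<le>m. real (m choose i)))"
    by (simp only: sum_distrib_left[symmetric] sum.distrib)
  also have "\<dots> = real (Suc m) * (real m * 2 ^ m / 2 + 2 ^ m)"
    by (simp only: sum_index_binomial sum_binomial)
  also have "\<dots> = real n * (real n + 1) * 2 ^ n / 4" using Suc by (simp add: field_simps)
  finally show ?thesis using Suc by simp
qed

definition binom_weight :: "nat \<Rightarrow> nat \<Rightarrow> real" where "binom_weight n l = real (n choose l) / 2 ^ n"

lemma sum_binom_weight_quadratic: "(\<Sum>l\<le>n. binom_weight n l * (\<alpha> + \<beta> * real l + \<gamma> * real l ^ 2)) = \<alpha> + \<beta> * real n / 2 + \<gamma> * real n * (real n + 1) / 4"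
proof -
  have "(\<Sum>l\<le>n. binom_weight n l * (\<alpha> + \<beta> * real l + \<gamma> * real l ^ 2))
     = (\<alpha> * (\<Sum>l\<le>n. real (n choose l)) + \<beta> * (\<Sum>l\<le>n. real l * real (n choose l)) + \<gamma> * (\<Sum>l\<le>n. real l ^ 2 * real (n choose l))) / 2 ^ n"
  proof -
    have "\<And>l. binom_weight n l * (\<alpha> + \<beta> * real l + \<gamma> * real l ^ 2)
       = (\<alpha> * real (n choose l) + \<beta> * (real l * real (n choose l)) + \<gamma> * (real l ^ 2 * real (n choose l))) / 2 ^ n"
      unfolding binom_weight_def by (simp add: field_simps)
    then have "(\<Sum>l\<le>n. binom_weight n l * (\<alpha> + \<beta> * real l + \<gamma> * real l ^ 2))
       = (\<Sum>l\<le>n. (\<alpha> * real (n choose l) + \<beta> * (real l * real (n choose l)) + \<gamma> * (real l ^ 2 * real (n choose l))) / 2 ^ n)"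
      by (intro sum.cong) auto
    also have "\<dots> = (\<alpha> * (\<Sum>l\<le>n. real (n choose l)) + \<beta> * (\<Sum>l\<le>n. real l * real (n choose l)) + \<gamma> * (\<Sum>l\<le>n. real l ^ 2 * real (n choose l))) / 2 ^ n"
      by (simp only: sum_divide_distrib[symmetric] sum.distrib sum_distrib_left)
    finally show ?thesis .
  qed
  also have "\<dots> = \<alpha> + \<beta> * real n / 2 + \<gamma> * real n * (real n + 1) / 4"
    unfolding sum_binomial sum_index_binomial sum_index_sq_binomial by (simp add: add_divide_distrib)
  finally show ?thesis .
qed

definition coherent_amp :: "nat \<Rightarrow> nat \<Rightarrow> real" where
  "coherent_amp n l = sqrt (real (n choose l)) * (sqrt 2 / 2) ^ n"

lemma half_sqrt2_power_sq: "((sqrt 2 / 2) ^ n) * ((sqrt 2 / 2) ^ n) = (1 / 2 ^ n :: real)"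
proof -
  have "((sqrt 2 / 2) ^ n) * ((sqrt 2 / 2) ^ n) = ((sqrt 2 / 2) * (sqrt 2 / 2)) ^ n"
    by (simp only: power_mult_distrib[symmetric])
  also have "(sqrt 2 / 2) * (sqrt 2 / 2) = (1/2 :: real)" by simp
  finally show ?thesis by (simp add: power_divide)
qed

lemma coherent_amp_sq: "coherent_amp n l * coherent_amp n l = binom_weight n l"
  unfolding coherent_amp_def binom_weight_def using half_sqrt2_power_sq[of n]
  by (simp add: algebra_simps)

lemma Suc_times_binomial_Suc: "real (Suc l) * real (n choose Suc l) = real (n - l) * real (n choose l)"
proof -
  have "Suc l * (n choose Suc l) = (n - l) * (n choose l)"
    using binomial_absorption[of l n] binomial_absorb_comp[of n l] by simp
  then show ?thesis by (metis of_nat_mult)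
qed

lemma coherent_amp_ladder: "coherent_amp n l * coherent_amp n (Suc l) * ladder n l = binom_weight n l * real (n - l)"
proof -
  let ?c = "(sqrt 2 / 2) ^ n :: real"
  have "sqrt (real (n choose Suc l)) * ladder n l
        = sqrt (real (n - l)) * sqrt (real (Suc l) * real (n choose Suc l))"
    unfolding ladder_def by (simp add: real_sqrt_mult)
  also have "\<dots> = sqrt (real (n - l)) * (sqrt (real (n - l)) * sqrt (real (n choose l)))"
    by (simp only: Suc_times_binomial_Suc real_sqrt_mult)
  also have "\<dots> = real (n - l) * sqrt (real (n choose l))"
    by (simp add: mult.assoc[symmetric])
  finally have e: "sqrt (real (n choose Suc l)) * ladder n l = real (n - l) * sqrt (real (n choose l))" .
  have "coherent_amp n l * coherent_amp n (Suc l) * ladder n l = sqrt (real (n choose l)) * (sqrt (real (n choose Suc l)) * ladder n l) * (?c * ?c)"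
    unfolding coherent_amp_def by (simp only: mult_ac)
  also have "\<dots> = real (n choose l) * real (n - l) * (?c * ?c)"
    unfolding e by (simp add: mult.assoc[symmetric] mult.commute[of _ "real (n - l)"])
  also have "\<dots> = binom_weight n l * real (n - l)"
    unfolding half_sqrt2_power_sq binom_weight_def by simp
  finally show ?thesis .
qed

lemma ladder_coherent_amp_Suc_sq: "ladder n l * ladder n l * (coherent_amp n (Suc l) * coherent_amp n (Suc l)) = binom_weight n l * real (n - l) ^ 2"
proof -
  have "ladder n l * ladder n l * (coherent_amp n (Suc l) * coherent_amp n (Suc l)) = real (n - l) * (real (Suc l) * real (n choose Suc l)) / 2 ^ n"
    unfolding ladder_sq coherent_amp_sq binom_weight_def by simp
  also have "\<dots> = binom_weight n l * real (n - l) ^ 2"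
    unfolding Suc_times_binomial_Suc binom_weight_def by (simp add: power2_eq_square)
  finally show ?thesis .
qed

lemma coherent_amp_ladder_ladder: "coherent_amp n l * coherent_amp n (Suc (Suc l)) * ladder n l * ladder n (Suc l) = binom_weight n l * real (n - l) * (real n - real l - 1)"
proof (cases "Suc l \<le> n")
  case True
  have h1: "binom_weight n (Suc l) \<noteq> 0" using True unfolding binom_weight_def by simp
  have "(coherent_amp n l * coherent_amp n (Suc (Suc l)) * ladder n l * ladder n (Suc l)) * binom_weight n (Suc l)
        = (coherent_amp n l * coherent_amp n (Suc l) * ladder n l) * (coherent_amp n (Suc l) * coherent_amp n (Suc (Suc l)) * ladder n (Suc l))"
    unfolding coherent_amp_sq[symmetric] by (simp only: mult_ac)
  also have "\<dots> = (binom_weight n l * real (n - l) * (real n - real l - 1)) * binom_weight n (Suc l)"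
    unfolding coherent_amp_ladder using True by (simp add: of_nat_diff)
  finally show ?thesis using h1 by simp
next
  case False
  then have "ladder n l = 0" "real (n - l) = 0" unfolding ladder_def by auto
  then show ?thesis by simp
qed

text \<open>Up to a global phase, \<open>twisted n \<theta>\<close> is the coherent state \<open>coherent n (pi/2) (-\<theta>)\<close>.\<close>

definition twisted :: "nat \<Rightarrow> real \<Rightarrow> nat \<Rightarrow> complex" where
  "twisted n \<theta> l = cis (\<theta> * real l) * complex_of_real (coherent_amp n l)"
definition Splus_tw :: "nat \<Rightarrow> real \<Rightarrow> nat \<Rightarrow> complex" where "Splus_tw n \<theta> = mvec {0..n} (Splus n) (twisted n \<theta>)"
definition Sminus_tw :: "nat \<Rightarrow> real \<Rightarrow> nat \<Rightarrow> complex" where "Sminus_tw n \<theta> = mvec {0..n} (Sminus n) (twisted n \<theta>)"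
definition Sz_tw :: "nat \<Rightarrow> real \<Rightarrow> nat \<Rightarrow> complex" where "Sz_tw n \<theta> = mvec {0..n} (Sz n) (twisted n \<theta>)"

lemma cnj_twisted_mult: "cnj (twisted n \<theta> j) * twisted n \<theta> k = cis (\<theta> * (real k - real j)) * complex_of_real (coherent_amp n j * coherent_amp n k)"
  unfolding twisted_def by (simp add: cis_cnj cis_mult algebra_simps)

lemma sum_atLeastAtMost_0_shift: fixes n :: nat and F :: "nat \<Rightarrow> 'a::comm_monoid_add" shows "(\<Sum>j\<in>{0..n}. F j) = F 0 + (\<Sum>l<n. F (Suc l))"
proof -
  have "{0..n} = {..<Suc n}" by auto
  then show ?thesis by (simp only: sum.lessThan_Suc_shift)
qed

lemma sum_atLeastAtMost_0_last: fixes n :: nat and F :: "nat \<Rightarrow> 'a::comm_monoid_add" shows "(\<Sum>j\<in>{0..n}. F j) = (\<Sum>l<n. F l) + F n"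
proof -
  have "{0..n} = {..<Suc n}" by auto
  then show ?thesis by (simp only: sum.lessThan_Suc)
qed

lemma sum_binom_weight_quadratic_atMost:
  assumes "\<And>l. l \<le> n \<Longrightarrow> f l = binom_weight n l * (\<alpha> + \<beta> * real l + \<gamma> * real l ^ 2)"
  shows "(\<Sum>l\<le>n. f l) = \<alpha> + \<beta> * real n / 2 + \<gamma> * real n * (real n + 1) / 4"
  using assms by (simp add: sum_binom_weight_quadratic[symmetric])

lemma sum_binom_weight_quadratic_lessThan:
  assumes "\<And>l. l < n \<Longrightarrow> f l = binom_weight n l * (\<alpha> + \<beta> * real l + \<gamma> * real l ^ 2)"
    and "\<alpha> + \<beta> * real n + \<gamma> * real n ^ 2 = 0"
  shows "(\<Sum>l<n. f l) = \<alpha> + \<beta> * real n / 2 + \<gamma> * real n * (real n + 1) / 4"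
proof -
  have "(\<Sum>l<n. f l) = (\<Sum>l<n. binom_weight n l * (\<alpha> + \<beta> * real l + \<gamma> * real l ^ 2))"
    using assms(1) by (intro sum.cong) auto
  also have "\<dots> = (\<Sum>l<n. binom_weight n l * (\<alpha> + \<beta> * real l + \<gamma> * real l ^ 2)) + binom_weight n n * (\<alpha> + \<beta> * real n + \<gamma> * real n ^ 2)"
    using assms(2) by simp
  also have "\<dots> = (\<Sum>l\<le>n. binom_weight n l * (\<alpha> + \<beta> * real l + \<gamma> * real l ^ 2))"
    by (simp add: lessThan_Suc_atMost[symmetric])
  finally show ?thesis by (simp only: sum_binom_weight_quadratic)
qed

lemma cinner_Splus_right: "cinner {0..n} w (mvec {0..n} (Splus n) v) = (\<Sum>l<n. cnj (w (Suc l)) * (complex_of_real (ladder n l) * v l))"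
  unfolding cinner_def mvec_Splus sum_atLeastAtMost_0_shift by (auto intro!: sum.cong)

lemma cinner_Sminus_right: "cinner {0..n} w (mvec {0..n} (Sminus n) v) = (\<Sum>l<n. cnj (w l) * (complex_of_real (ladder n l) * v (Suc l)))"
  unfolding cinner_def mvec_Sminus sum_atLeastAtMost_0_last by (auto intro!: sum.cong)

lemma cinner_Sz_right: "cinner {0..n} w (mvec {0..n} (Sz n) v) = (\<Sum>l\<le>n. cnj (w l) * (complex_of_real (spin_M n l) * v l))"
  unfolding cinner_def mvec_Sz by (subst atLeast0AtMost) (auto intro!: sum.cong)

lemma cinner_Splus_left: "cinner {0..n} (mvec {0..n} (Splus n) v) w = (\<Sum>l<n. cnj (complex_of_real (ladder n l) * v l) * w (Suc l))"
  by (subst cinner_commute) (simp add: cinner_Splus_right mult.commute)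

lemma cinner_Sminus_left: "cinner {0..n} (mvec {0..n} (Sminus n) v) w = (\<Sum>l<n. cnj (complex_of_real (ladder n l) * v (Suc l)) * w l)"
  by (subst cinner_commute) (simp add: cinner_Sminus_right mult.commute)

lemma cinner_Sz_left: "cinner {0..n} (mvec {0..n} (Sz n) v) w = (\<Sum>l\<le>n. cnj (complex_of_real (spin_M n l) * v l) * w l)"
  by (subst cinner_commute) (simp add: cinner_Sz_right mult.commute)

lemma cinner_twisted_Splus: "cinner {0..n} (twisted n \<theta>) (Splus_tw n \<theta>) = cis (-\<theta>) * complex_of_real (real n / 2)"
proof -
  have "cinner {0..n} (twisted n \<theta>) (Splus_tw n \<theta>) = (\<Sum>l<n. cis (-\<theta>) * complex_of_real (coherent_amp n l * coherent_amp n (Suc l) * ladder n l))"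
    unfolding Splus_tw_def cinner_Splus_right
  proof (intro sum.cong refl)
    fix l
    have e: "cnj (twisted n \<theta> (Suc l)) * twisted n \<theta> l = cis (-\<theta>) * complex_of_real (coherent_amp n (Suc l) * coherent_amp n l)"
      by (simp add: cnj_twisted_mult)
    show "cnj (twisted n \<theta> (Suc l)) * (complex_of_real (ladder n l) * twisted n \<theta> l)
       = cis (-\<theta>) * complex_of_real (coherent_amp n l * coherent_amp n (Suc l) * ladder n l)"
      using e by (simp add: algebra_simps)
  qed
  also have "\<dots> = cis (-\<theta>) * complex_of_real (\<Sum>l<n. coherent_amp n l * coherent_amp n (Suc l) * ladder n l)"
    by (simp add: sum_distrib_left)
  also have "(\<Sum>l<n. coherent_amp n l * coherent_amp n (Suc l) * ladder n l) = real n + (-1) * real n / 2 + 0 * real n * (real n + 1) / 4"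
    by (rule sum_binom_weight_quadratic_lessThan) (auto simp: coherent_amp_ladder of_nat_diff)
  finally show ?thesis by simp
qed

lemma cnj_twisted_self: "cnj (twisted n \<theta> l) * twisted n \<theta> l = complex_of_real (binom_weight n l)"
  by (simp add: cnj_twisted_mult coherent_amp_sq)

lemma cnj_twisted_Suc: "cnj (twisted n \<theta> l) * twisted n \<theta> (Suc l) = cis \<theta> * complex_of_real (coherent_amp n l * coherent_amp n (Suc l))"
  by (simp add: cnj_twisted_mult)

lemma cnj_Suc_twisted: "cnj (twisted n \<theta> (Suc l)) * twisted n \<theta> l = cis (-\<theta>) * complex_of_real (coherent_amp n l * coherent_amp n (Suc l))"
proof -
  have "cnj (twisted n \<theta> (Suc l)) * twisted n \<theta> l = cis (\<theta> * (real l - real (Suc l))) * complex_of_real (coherent_amp n (Suc l) * coherent_amp n l)"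
    by (rule cnj_twisted_mult)
  also have "\<dots> = cis (-\<theta>) * complex_of_real (coherent_amp n l * coherent_amp n (Suc l))"
    by (simp only: mult.commute[of "coherent_amp n (Suc l)"]) simp
  finally show ?thesis .
qed

lemma cnj_twisted_Suc_Suc: "cnj (twisted n \<theta> l) * twisted n \<theta> (Suc (Suc l)) = cis (2 * \<theta>) * complex_of_real (coherent_amp n l * coherent_amp n (Suc (Suc l)))"
  by (simp add: cnj_twisted_mult algebra_simps)

lemma cinner_twisted_Sminus: "cinner {0..n} (twisted n \<theta>) (Sminus_tw n \<theta>) = cis \<theta> * complex_of_real (real n / 2)"
proof -
  have "cinner {0..n} (twisted n \<theta>) (Sminus_tw n \<theta>) = (\<Sum>l<n. cis \<theta> * complex_of_real (coherent_amp n l * coherent_amp n (Suc l) * ladder n l))"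
    unfolding Sminus_tw_def cinner_Sminus_right
  proof (intro sum.cong refl)
    fix l
    show "cnj (twisted n \<theta> l) * (complex_of_real (ladder n l) * twisted n \<theta> (Suc l))
       = cis \<theta> * complex_of_real (coherent_amp n l * coherent_amp n (Suc l) * ladder n l)"
      using cnj_twisted_Suc[of n \<theta> l] by (simp add: algebra_simps)
  qed
  also have "\<dots> = cis \<theta> * complex_of_real (\<Sum>l<n. coherent_amp n l * coherent_amp n (Suc l) * ladder n l)"
    by (simp add: sum_distrib_left)
  also have "(\<Sum>l<n. coherent_amp n l * coherent_amp n (Suc l) * ladder n l) = real n + (-1) * real n / 2 + 0 * real n * (real n + 1) / 4"
    by (rule sum_binom_weight_quadratic_lessThan) (auto simp: coherent_amp_ladder of_nat_diff)
  finally show ?thesis by simp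
qed

lemma cinner_twisted_Sz: "cinner {0..n} (twisted n \<theta>) (Sz_tw n \<theta>) = 0"
proof -
  have "cinner {0..n} (twisted n \<theta>) (Sz_tw n \<theta>) = (\<Sum>l\<le>n. complex_of_real (binom_weight n l * spin_M n l))"
    unfolding Sz_tw_def cinner_Sz_right
  proof (intro sum.cong refl)
    fix l
    show "cnj (twisted n \<theta> l) * (complex_of_real (spin_M n l) * twisted n \<theta> l) = complex_of_real (binom_weight n l * spin_M n l)"
      using cnj_twisted_self[of n \<theta> l] by (simp add: algebra_simps)
  qed
  also have "\<dots> = complex_of_real (\<Sum>l\<le>n. binom_weight n l * spin_M n l)" by simp
  also have "(\<Sum>l\<le>n. binom_weight n l * spin_M n l) = (- real n / 2) + 1 * real n / 2 + 0 * real n * (real n + 1) / 4"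
    by (rule sum_binom_weight_quadratic_atMost) (simp add: spin_M_def)
  finally show ?thesis by simp
qed

lemma Splus_tw_Suc: "l < n \<Longrightarrow> Splus_tw n \<theta> (Suc l) = complex_of_real (ladder n l) * twisted n \<theta> l"
  unfolding Splus_tw_def mvec_Splus by simp

lemma Sminus_tw_eq: "Sminus_tw n \<theta> l = (if l < n then complex_of_real (ladder n l) * twisted n \<theta> (Suc l) else 0)"
  unfolding Sminus_tw_def mvec_Sminus ..

lemma Sz_tw_eq: "l \<le> n \<Longrightarrow> Sz_tw n \<theta> l = complex_of_real (spin_M n l) * twisted n \<theta> l"
  unfolding Sz_tw_def mvec_Sz by simp

lemma cinner_Splus_Splus: "cinner {0..n} (Splus_tw n \<theta>) (Splus_tw n \<theta>) = complex_of_real ((real n ^ 2 + real n) / 4)"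
proof -
  have "cinner {0..n} (Splus_tw n \<theta>) (Splus_tw n \<theta>) = (\<Sum>l<n. complex_of_real (ladder n l * ladder n l * binom_weight n l))"
    unfolding Splus_tw_def[of n \<theta>] cinner_Splus_left unfolding Splus_tw_def[symmetric]
  proof (intro sum.cong refl)
    fix l assume "l \<in> {..<n}"
    then show "cnj (complex_of_real (ladder n l) * twisted n \<theta> l) * Splus_tw n \<theta> (Suc l) = complex_of_real (ladder n l * ladder n l * binom_weight n l)"
      using cnj_twisted_self[of n \<theta> l] by (simp add: Splus_tw_Suc algebra_simps)
  qed
  also have "\<dots> = complex_of_real (\<Sum>l<n. ladder n l * ladder n l * binom_weight n l)" by simp
  also have "(\<Sum>l<n. ladder n l * ladder n l * binom_weight n l) = real n + (real n - 1) * real n / 2 + (-1) * real n * (real n + 1) / 4"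
    by (rule sum_binom_weight_quadratic_lessThan) (auto simp: ladder_sq of_nat_diff algebra_simps power2_eq_square)
  finally have X: "cinner {0..n} (Splus_tw n \<theta>) (Splus_tw n \<theta>) = complex_of_real (real n + (real n - 1) * real n / 2 + (-1) * real n * (real n + 1) / 4)" .
  have "real n + (real n - 1) * real n / 2 + (-1) * real n * (real n + 1) / 4 = (real n ^ 2 + real n) / 4"
    by (simp add: field_simps power2_eq_square)
  then show ?thesis by (simp only: X)
qed

lemma cinner_Sminus_Sminus: "cinner {0..n} (Sminus_tw n \<theta>) (Sminus_tw n \<theta>) = complex_of_real ((real n ^ 2 + real n) / 4)"
proof -
  have "cinner {0..n} (Sminus_tw n \<theta>) (Sminus_tw n \<theta>) = (\<Sum>l<n. complex_of_real (ladder n l * ladder n l * (coherent_amp n (Suc l) * coherent_amp n (Suc l))))"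
    unfolding Sminus_tw_def[of n \<theta>] cinner_Sminus_left unfolding Sminus_tw_def[symmetric]
  proof (intro sum.cong refl)
    fix l assume "l \<in> {..<n}"
    then show "cnj (complex_of_real (ladder n l) * twisted n \<theta> (Suc l)) * Sminus_tw n \<theta> l = complex_of_real (ladder n l * ladder n l * (coherent_amp n (Suc l) * coherent_amp n (Suc l)))"
      using cnj_twisted_self[of n \<theta> "Suc l"] by (simp add: Sminus_tw_eq coherent_amp_sq algebra_simps)
  qed
  also have "\<dots> = complex_of_real (\<Sum>l<n. ladder n l * ladder n l * (coherent_amp n (Suc l) * coherent_amp n (Suc l)))" by simp
  also have "(\<Sum>l<n. ladder n l * ladder n l * (coherent_amp n (Suc l) * coherent_amp n (Suc l))) = real n ^ 2 + (- 2 * real n) * real n / 2 + 1 * real n * (real n + 1) / 4"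
    by (rule sum_binom_weight_quadratic_lessThan) (simp_all only: ladder_coherent_amp_Suc_sq, auto simp: of_nat_diff algebra_simps power2_eq_square)
  finally have X: "cinner {0..n} (Sminus_tw n \<theta>) (Sminus_tw n \<theta>) = complex_of_real (real n ^ 2 + (- 2 * real n) * real n / 2 + 1 * real n * (real n + 1) / 4)" .
  have "real n ^ 2 + (- 2 * real n) * real n / 2 + 1 * real n * (real n + 1) / 4 = (real n ^ 2 + real n) / 4"
    by (simp add: field_simps power2_eq_square)
  then show ?thesis by (simp only: X)
qed

lemma cinner_Splus_Sminus: "cinner {0..n} (Splus_tw n \<theta>) (Sminus_tw n \<theta>) = cis (2 * \<theta>) * complex_of_real ((real n ^ 2 - real n) / 4)"
proof -
  have "cinner {0..n} (Splus_tw n \<theta>) (Sminus_tw n \<theta>) = (\<Sum>l<n. cis (2 * \<theta>) * complex_of_real (binom_weight n l * real (n - l) * (real n - real l - 1)))"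
    unfolding Splus_tw_def[of n \<theta>] cinner_Splus_left
  proof (intro sum.cong refl)
    fix l assume l: "l \<in> {..<n}"
    show "cnj (complex_of_real (ladder n l) * twisted n \<theta> l) * Sminus_tw n \<theta> (Suc l) =
          cis (2 * \<theta>) * complex_of_real (binom_weight n l * real (n - l) * (real n - real l - 1))"
    proof (cases "Suc l < n")
      case True
      have "cnj (complex_of_real (ladder n l) * twisted n \<theta> l) * Sminus_tw n \<theta> (Suc l)
          = cis (2 * \<theta>) * complex_of_real (coherent_amp n l * coherent_amp n (Suc (Suc l)) * ladder n l * ladder n (Suc l))"
        using True cnj_twisted_Suc_Suc[of n \<theta> l] by (simp add: Sminus_tw_eq algebra_simps)
      then show ?thesis by (simp only: coherent_amp_ladder_ladder)
    next
      case False
      then have "Suc l = n" using l by simp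
      then have z: "real n - real l - 1 = 0" by auto
      show ?thesis using False by (simp only: Sminus_tw_eq z if_False) simp
    qed
  qed
  also have "\<dots> = cis (2 * \<theta>) * complex_of_real (\<Sum>l<n. binom_weight n l * real (n - l) * (real n - real l - 1))"
    by (simp add: sum_distrib_left)
  also have "(\<Sum>l<n. binom_weight n l * real (n - l) * (real n - real l - 1)) = (real n ^ 2 - real n) + (1 - 2 * real n) * real n / 2 + 1 * real n * (real n + 1) / 4"
    by (rule sum_binom_weight_quadratic_lessThan) (auto simp: of_nat_diff algebra_simps power2_eq_square)
  also have "(real n ^ 2 - real n) + (1 - 2 * real n) * real n / 2 + 1 * real n * (real n + 1) / 4 = (real n ^ 2 - real n) / 4"
    by (simp add: field_simps power2_eq_square)
  finally show ?thesis .
qed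

lemma cinner_Sminus_Splus: "cinner {0..n} (Sminus_tw n \<theta>) (Splus_tw n \<theta>) = cis (- (2 * \<theta>)) * complex_of_real ((real n ^ 2 - real n) / 4)"
  by (subst cinner_commute) (simp add: cinner_Splus_Sminus cis_cnj)

lemma cinner_Splus_Sz: "cinner {0..n} (Splus_tw n \<theta>) (Sz_tw n \<theta>) = cis \<theta> * complex_of_real (real n / 4)"
proof -
  have "cinner {0..n} (Splus_tw n \<theta>) (Sz_tw n \<theta>) = (\<Sum>l<n. cis \<theta> * complex_of_real (coherent_amp n l * coherent_amp n (Suc l) * ladder n l * spin_M n (Suc l)))"
    unfolding Splus_tw_def[of n \<theta>] cinner_Splus_left
  proof (intro sum.cong refl)
    fix l assume l: "l \<in> {..<n}"
    then show "cnj (complex_of_real (ladder n l) * twisted n \<theta> l) * Sz_tw n \<theta> (Suc l) =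
          cis \<theta> * complex_of_real (coherent_amp n l * coherent_amp n (Suc l) * ladder n l * spin_M n (Suc l))"
      using cnj_twisted_Suc[of n \<theta> l] by (simp add: Sz_tw_eq algebra_simps)
  qed
  also have "\<dots> = cis \<theta> * complex_of_real (\<Sum>l<n. coherent_amp n l * coherent_amp n (Suc l) * ladder n l * spin_M n (Suc l))"
    by (simp add: sum_distrib_left)
  also have "(\<Sum>l<n. coherent_amp n l * coherent_amp n (Suc l) * ladder n l * spin_M n (Suc l)) = (real n - real n ^ 2 / 2) + (3 * real n / 2 - 1) * real n / 2 + (-1) * real n * (real n + 1) / 4"
    by (rule sum_binom_weight_quadratic_lessThan) (simp_all only: coherent_amp_ladder, auto simp: of_nat_diff algebra_simps power2_eq_square spin_M_def)
  also have "(real n - real n ^ 2 / 2) + (3 * real n / 2 - 1) * real n / 2 + (-1) * real n * (real n + 1) / 4 = real n / 4"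
    by (simp add: field_simps power2_eq_square)
  finally show ?thesis .
qed

lemma cinner_Sminus_Sz: "cinner {0..n} (Sminus_tw n \<theta>) (Sz_tw n \<theta>) = cis (-\<theta>) * complex_of_real (- real n / 4)"
proof -
  have "cinner {0..n} (Sminus_tw n \<theta>) (Sz_tw n \<theta>) = (\<Sum>l<n. cis (-\<theta>) * complex_of_real (coherent_amp n l * coherent_amp n (Suc l) * ladder n l * spin_M n l))"
    unfolding Sminus_tw_def[of n \<theta>] cinner_Sminus_left
  proof (intro sum.cong refl)
    fix l assume l: "l \<in> {..<n}"
    then show "cnj (complex_of_real (ladder n l) * twisted n \<theta> (Suc l)) * Sz_tw n \<theta> l =
          cis (-\<theta>) * complex_of_real (coherent_amp n l * coherent_amp n (Suc l) * ladder n l * spin_M n l)"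
      using cnj_Suc_twisted[of n \<theta> l] by (simp add: Sz_tw_eq algebra_simps)
  qed
  also have "\<dots> = cis (-\<theta>) * complex_of_real (\<Sum>l<n. coherent_amp n l * coherent_amp n (Suc l) * ladder n l * spin_M n l)"
    by (simp add: sum_distrib_left)
  also have "(\<Sum>l<n. coherent_amp n l * coherent_amp n (Suc l) * ladder n l * spin_M n l) = (- (real n ^ 2) / 2) + (3 * real n / 2) * real n / 2 + (-1) * real n * (real n + 1) / 4"
    by (rule sum_binom_weight_quadratic_lessThan) (simp_all only: coherent_amp_ladder, auto simp: of_nat_diff algebra_simps power2_eq_square spin_M_def)
  also have "(- (real n ^ 2) / 2) + (3 * real n / 2) * real n / 2 + (-1) * real n * (real n + 1) / 4 = - real n / 4"
    by (simp add: field_simps power2_eq_square)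
  finally show ?thesis .
qed

lemma cinner_Sz_Sz: "cinner {0..n} (Sz_tw n \<theta>) (Sz_tw n \<theta>) = complex_of_real (real n / 4)"
proof -
  have "cinner {0..n} (Sz_tw n \<theta>) (Sz_tw n \<theta>) = (\<Sum>l\<le>n. complex_of_real (binom_weight n l * spin_M n l ^ 2))"
    unfolding Sz_tw_def[of n \<theta>] cinner_Sz_left unfolding Sz_tw_def[symmetric]
  proof (intro sum.cong refl)
    fix l assume "l \<in> {..n}"
    then show "cnj (complex_of_real (spin_M n l) * twisted n \<theta> l) * Sz_tw n \<theta> l = complex_of_real (binom_weight n l * spin_M n l ^ 2)"
      using cnj_twisted_self[of n \<theta> l] by (simp add: Sz_tw_eq algebra_simps power2_eq_square)
  qed
  also have "\<dots> = complex_of_real (\<Sum>l\<le>n. binom_weight n l * spin_M n l ^ 2)" by simp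
  also have "(\<Sum>l\<le>n. binom_weight n l * spin_M n l ^ 2) = real n ^ 2 / 4 + (- real n) * real n / 2 + 1 * real n * (real n + 1) / 4"
    by (rule sum_binom_weight_quadratic_atMost) (simp add: spin_M_def algebra_simps power2_eq_square)
  also have "real n ^ 2 / 4 + (- real n) * real n / 2 + 1 * real n * (real n + 1) / 4 = real n / 4"
    by (simp add: field_simps power2_eq_square)
  finally show ?thesis .
qed

definition ladder_comb :: "nat \<Rightarrow> real \<Rightarrow> complex \<Rightarrow> complex \<Rightarrow> complex \<Rightarrow> nat \<Rightarrow> complex" where
  "ladder_comb n \<theta> a b c = (\<lambda>j. (a * Splus_tw n \<theta> j + b * Sminus_tw n \<theta> j) + c * Sz_tw n \<theta> j)"

lemma cinner_twisted_ladder_comb: "cinner {0..n} (twisted n \<theta>) (ladder_comb n \<theta> a b c)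
   = a * (cis (-\<theta>) * complex_of_real (real n / 2)) + b * (cis \<theta> * complex_of_real (real n / 2))"
  unfolding ladder_comb_def cinner_add_right cinner_scale_right cinner_twisted_Splus cinner_twisted_Sminus cinner_twisted_Sz by simp

lemma cinner_ladder_comb: "cinner {0..n} (ladder_comb n \<theta> a b c) (ladder_comb n \<theta> a b c)
   = cnj a * (a * complex_of_real ((real n ^ 2 + real n) / 4) + b * (cis (2 * \<theta>) * complex_of_real ((real n ^ 2 - real n) / 4)) + c * (cis \<theta> * complex_of_real (real n / 4)))
   + cnj b * (a * (cis (- (2 * \<theta>)) * complex_of_real ((real n ^ 2 - real n) / 4)) + b * complex_of_real ((real n ^ 2 + real n) / 4) + c * (cis (-\<theta>) * complex_of_real (- real n / 4)))
   + cnj c * (a * cnj (cis \<theta> * complex_of_real (real n / 4)) + b * cnj (cis (-\<theta>) * complex_of_real (- real n / 4)) + c * complex_of_real (real n / 4))"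
proof -
  have a: "cinner {0..n} (Sz_tw n \<theta>) (Splus_tw n \<theta>) = cnj (cis \<theta> * complex_of_real (real n / 4))"
    by (subst cinner_commute) (simp only: cinner_Splus_Sz)
  have b: "cinner {0..n} (Sz_tw n \<theta>) (Sminus_tw n \<theta>) = cnj (cis (-\<theta>) * complex_of_real (- real n / 4))"
    by (subst cinner_commute) (simp only: cinner_Sminus_Sz)
  show ?thesis
    unfolding ladder_comb_def cinner_add_right cinner_scale_right cinner_add_left cinner_scale_left
      cinner_Splus_Splus cinner_Sminus_Sminus cinner_Splus_Sminus cinner_Sminus_Splus cinner_Splus_Sz cinner_Sminus_Sz cinner_Sz_Sz a b by (simp add: algebra_simps)
qed

lemma cis_eq_cos_sin: "cis t = complex_of_real (cos t) + \<i> * complex_of_real (sin t)"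
  by (simp add: complex_eq_iff)

lemma divide_2i: "x / (2 * \<i>) = - (\<i> * x) / 2" "x / (\<i> * 2) = - (\<i> * x) / 2"
  by (simp_all add: field_simps)

definition Sx_tw :: "nat \<Rightarrow> real \<Rightarrow> nat \<Rightarrow> complex" where
  "Sx_tw n \<theta> = mvec {0..n} (Sx n) (twisted n \<theta>)"

definition SySz_tw :: "nat \<Rightarrow> real \<Rightarrow> nat \<Rightarrow> complex" where
  "SySz_tw n \<theta> = (\<lambda>l. mvec {0..n} (Sy n) (twisted n \<theta>) l + Sz_tw n \<theta> l)"

lemma Sx_tw_eq_ladder_comb: "Sx_tw n \<theta> = ladder_comb n \<theta> (1/2) (1/2) 0"
proof
  fix l
  have "Sx_tw n \<theta> l = (\<Sum>k\<in>{0..n}. 1/2 * (Splus n l k * twisted n \<theta> k) + 1/2 * (Sminus n l k * twisted n \<theta> k))"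
    unfolding Sx_tw_def mvec_def Sx_def by (intro sum.cong refl) (simp add: algebra_simps)
  also have "\<dots> = ladder_comb n \<theta> (1/2) (1/2) 0 l"
    unfolding ladder_comb_def Splus_tw_def Sminus_tw_def mvec_def by (simp only: sum.distrib sum_distrib_left[symmetric]) simp
  finally show "Sx_tw n \<theta> l = ladder_comb n \<theta> (1/2) (1/2) 0 l" .
qed

lemma SySz_tw_eq_ladder_comb: "SySz_tw n \<theta> = ladder_comb n \<theta> (-\<i>/2) (\<i>/2) 1"
proof
  fix l
  have "mvec {0..n} (Sy n) (twisted n \<theta>) l = (\<Sum>k\<in>{0..n}. (-\<i>/2) * (Splus n l k * twisted n \<theta> k) + (\<i>/2) * (Sminus n l k * twisted n \<theta> k))"
    unfolding mvec_def Sy_def divide_2i by (intro sum.cong refl) (simp add: field_simps)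
  also have "\<dots> = (-\<i>/2) * Splus_tw n \<theta> l + (\<i>/2) * Sminus_tw n \<theta> l"
    unfolding Splus_tw_def Sminus_tw_def mvec_def by (simp only: sum.distrib sum_distrib_left[symmetric])
  finally show "SySz_tw n \<theta> l = ladder_comb n \<theta> (-\<i>/2) (\<i>/2) 1 l" unfolding SySz_tw_def ladder_comb_def by simp
qed

definition mean_Sx :: "nat \<Rightarrow> real \<Rightarrow> real" where
  "mean_Sx n \<theta> = real n / 2 * cos \<theta>"

definition mean_sq_Sx :: "nat \<Rightarrow> real \<Rightarrow> real" where
  "mean_sq_Sx n \<theta> = (real n ^ 2 + real n) / 8 + (real n ^ 2 - real n) / 8 * cos (2 * \<theta>)"

definition mean_SySz :: "nat \<Rightarrow> real \<Rightarrow> real" where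
  "mean_SySz n \<theta> = - (real n / 2 * sin \<theta>)"

definition mean_sq_SySz :: "nat \<Rightarrow> real \<Rightarrow> real" where
  "mean_sq_SySz n \<theta> = (real n ^ 2 + real n) / 8 - (real n ^ 2 - real n) / 8 * cos (2 * \<theta>) + real n / 4"

lemma cinner_twisted_Sx_tw: "cinner {0..n} (twisted n \<theta>) (Sx_tw n \<theta>) = complex_of_real (mean_Sx n \<theta>)"
  unfolding Sx_tw_eq_ladder_comb cinner_twisted_ladder_comb cis_eq_cos_sin mean_Sx_def
  by (simp add: complex_eq_iff algebra_simps)

lemma cinner_Sx_tw_Sx_tw: "cinner {0..n} (Sx_tw n \<theta>) (Sx_tw n \<theta>) = complex_of_real (mean_sq_Sx n \<theta>)"
  unfolding Sx_tw_eq_ladder_comb cinner_ladder_comb cis_eq_cos_sin mean_sq_Sx_def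
  by (simp add: complex_eq_iff algebra_simps power2_eq_square) (simp add: field_simps)

lemma cinner_twisted_SySz_tw: "cinner {0..n} (twisted n \<theta>) (SySz_tw n \<theta>) = complex_of_real (mean_SySz n \<theta>)"
  unfolding SySz_tw_eq_ladder_comb cinner_twisted_ladder_comb cis_eq_cos_sin mean_SySz_def
  by (simp add: complex_eq_iff algebra_simps)

lemma cinner_SySz_tw_SySz_tw: "cinner {0..n} (SySz_tw n \<theta>) (SySz_tw n \<theta>) = complex_of_real (mean_sq_SySz n \<theta>)"
  unfolding SySz_tw_eq_ladder_comb cinner_ladder_comb cis_eq_cos_sin mean_sq_SySz_def
  by (simp add: complex_eq_iff algebra_simps power2_eq_square) (simp add: field_simps)

section \<open>Closed form of the SRU2 state and its derivatives\<close>

lemma SPhi_eq_phase_Sx: "SPhi n \<Phi> i j = cis (- \<Phi> * (real i - real j)) * Sx n i j"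
proof (cases "i = Suc j")
  case True
  then show ?thesis unfolding SPhi_def Sx_def Sy_def Splus_eq Sminus_eq divide_2i
    by (simp add: cis_eq_cos_sin complex_eq_iff field_simps)
next
  case False
  show ?thesis
  proof (cases "j = Suc i")
    case True
    then show ?thesis unfolding SPhi_def Sx_def Sy_def Splus_eq Sminus_eq divide_2i
      by (simp add: cis_eq_cos_sin complex_eq_iff field_simps)
  next
    case F2: False
    then show ?thesis using False unfolding SPhi_def Sx_def Sy_def Splus_eq Sminus_eq by simp
  qed
qed

lemma mpow_phase:
  assumes "\<And>i j. X i j = cis (- \<Phi> * (real i - real j)) * Y i j"
  shows "mpow I X k i j = cis (- \<Phi> * (real i - real j)) * mpow I Y k i j"
proof (induction k arbitrary: i)
  case 0
  then show ?case by (simp add: mid_def)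
next
  case (Suc k)
  have "mpow I X (Suc k) i j = (\<Sum>l\<in>I. cis (- \<Phi> * (real i - real j)) * (Y i l * mpow I Y k l j))"
  proof (simp only: mpow.simps mmul_def, intro sum.cong refl)
    fix l
    have c: "cis (- \<Phi> * (real i - real l)) * cis (- \<Phi> * (real l - real j)) = cis (- \<Phi> * (real i - real j))"
      by (simp add: cis_mult algebra_simps)
    have "X i l * mpow I X k l j = (cis (- \<Phi> * (real i - real l)) * cis (- \<Phi> * (real l - real j))) * (Y i l * mpow I Y k l j)"
      by (simp only: assms Suc.IH mult_ac)
    then show "X i l * mpow I X k l j = cis (- \<Phi> * (real i - real j)) * (Y i l * mpow I Y k l j)"
      by (simp only: c)
  qed
  also have "\<dots> = cis (- \<Phi> * (real i - real j)) * mpow I Y (Suc k) i j"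
    by (simp add: mmul_def sum_distrib_left)
  finally show ?case .
qed

lemma mscale_i_Sx: "mscale (\<i> * complex_of_real \<gamma>) (Sx n) = mscale (complex_of_real \<gamma>) (gen_x n)"
  unfolding mscale_def gen_x_def by (auto intro!: ext)

lemma mexp_SPhi:
  assumes "i \<in> {0..n}"
  shows "mexp {0..n} (mscale (\<i> * complex_of_real \<gamma>) (SPhi n \<Phi>)) i j
       = cis (- \<Phi> * (real i - real j)) * rot_x n (complex_of_real \<gamma>) i j"
proof -
  let ?z = "complex_of_real \<gamma>"
  have ph: "\<And>i j. mscale (\<i> * ?z) (SPhi n \<Phi>) i j = cis (- \<Phi> * (real i - real j)) * mscale (\<i> * ?z) (Sx n) i j"
    unfolding mscale_def SPhi_eq_phase_Sx by (simp add: mult_ac)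
  have s0: "summable (\<lambda>k. mexp_coeff {0..n} (gen_x n) i j k * ?z ^ k)"
    using summable_mexp_coeff[of "{0..n}" i "gen_x n" j ?z] assms by simp
  have "(\<lambda>k. mpow {0..n} (mscale ?z (gen_x n)) k i j / of_nat (fact k)) = (\<lambda>k. mexp_coeff {0..n} (gen_x n) i j k * ?z ^ k)"
    by (simp only: mpow_scale) (simp add: mscale_def mexp_coeff_def mult_ac)
  then have s: "summable (\<lambda>k. mpow {0..n} (mscale ?z (gen_x n)) k i j / of_nat (fact k))"
    using s0 by simp
  have "mexp {0..n} (mscale (\<i> * ?z) (SPhi n \<Phi>)) i j
       = (\<Sum>k. cis (- \<Phi> * (real i - real j)) * (mpow {0..n} (mscale ?z (gen_x n)) k i j / of_nat (fact k)))"
    unfolding mexp_def mpow_phase[OF ph] mscale_i_Sx by simp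
  also have "\<dots> = cis (- \<Phi> * (real i - real j)) * rot_x n ?z i j"
    unfolding rot_x_def mexp_def using s by (rule suminf_mult)
  finally show ?thesis .
qed

lemma mpow_diag:
  assumes "finite I" "i \<in> I" "\<And>i j. i \<in> I \<Longrightarrow> D i j = (if i = j then d i else 0)"
  shows "mpow I D k i j = (if i = j then d i ^ k else 0)"
proof (induction k)
  case 0
  then show ?case by (simp add: mid_def)
next
  case (Suc k)
  have "mpow I D (Suc k) i j = (\<Sum>l\<in>I. if l = i then d i * mpow I D k i j else 0)"
    unfolding mpow.simps mmul_def using assms(3)[OF assms(2)] by (intro sum.cong) auto
  also have "\<dots> = d i * mpow I D k i j" using assms(1,2) by simp
  finally show ?case using Suc.IH by simp
qed

lemma exp_sums_divide_fact: "(\<lambda>k. x ^ k / of_nat (fact k)) sums exp (x::complex)"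
proof -
  have "(\<lambda>k. x ^ k /\<^sub>R fact k) = (\<lambda>k. x ^ k / of_nat (fact k))"
    by (auto intro!: ext simp: scaleR_conv_of_real divide_inverse mult.commute)
  then show ?thesis using exp_converges[of x] by simp
qed

lemma mexp_diag:
  assumes "finite I" "i \<in> I" "\<And>i j. i \<in> I \<Longrightarrow> D i j = (if i = j then d i else 0)"
  shows "mexp I D i j = (if i = j then exp (d i) else 0)"
proof -
  have e: "\<And>k. mpow I D k i j = (if i = j then d i ^ k else 0)" by (rule mpow_diag[OF assms])
  show ?thesis unfolding mexp_def e
    using sums_unique[OF exp_sums_divide_fact[of "d i"]] by auto
qed

lemma coherent_equator:
  assumes l: "l \<le> n"
  shows "coherent n (pi/2) 0 l = complex_of_real (coherent_amp n l)"
proof -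
  have c: "cos (pi / 2 / 2) = sqrt 2 / 2" "sin (pi / 2 / 2) = sqrt 2 / 2"
    by (simp_all add: cos_45 sin_45)
  have "(sqrt 2 / 2) ^ l * (sqrt 2 / 2) ^ (n - l) = (sqrt 2 / 2 :: real) ^ n"
    using l by (simp add: power_add[symmetric])
  then show ?thesis using l unfolding coherent_def coherent_amp_def c by (simp add: mult.assoc)
qed

lemma mvec_tensor_mid:
  assumes "k \<le> m"
  shows "mvec (two_idx n m) (tensor X mid) v (j, k) = (\<Sum>l\<in>{0..n}. X j l * v (l, k))"
proof -
  have "mvec (two_idx n m) (tensor X mid) v (j, k) = (\<Sum>l\<in>{0..n}. \<Sum>p\<in>{0..m}. X j l * mid k p * v (l, p))"
    unfolding mvec_def two_idx_def spin_idx_def tensor_def sum.cartesian_product by (simp add: case_prod_beta)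
  also have "\<dots> = (\<Sum>l\<in>{0..n}. X j l * v (l, k))"
  proof (intro sum.cong refl)
    fix l
    have e: "(\<lambda>p. X j l * mid k p * v (l, p)) = (\<lambda>p. if p = k then X j l * v (l, p) else 0)"
      by (auto simp: mid_def)
    show "(\<Sum>p\<in>{0..m}. X j l * mid k p * v (l, p)) = X j l * v (l, k)"
      unfolding e using assms by simp
  qed
  finally show ?thesis .
qed

lemma mscale_Sz_tensor_Sz:
  assumes "i \<in> two_idx n m"
  shows "mscale (\<i> * complex_of_real c) (tensor (Sz n) (Sz m)) i i'
       = (if i = i' then \<i> * complex_of_real (c * spin_M n (fst i) * spin_M m (snd i)) else 0)"
  using assms unfolding mscale_def tensor_def Sz_def two_idx_def spin_idx_def
  by (cases i; cases i') auto

lemma mexp_Sz_tensor_Sz: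
  assumes "i \<in> two_idx n m"
  shows "mexp (two_idx n m) (mscale (\<i> * complex_of_real c) (tensor (Sz n) (Sz m))) i i'
       = (if i = i' then cis (c * spin_M n (fst i) * spin_M m (snd i)) else 0)"
proof -
  have fin: "finite (two_idx n m)" unfolding two_idx_def spin_idx_def by simp
  show ?thesis
    by (subst mexp_diag[OF fin assms, where d="\<lambda>i. \<i> * complex_of_real (c * spin_M n (fst i) * spin_M m (snd i))"])
       (auto simp: mscale_Sz_tensor_Sz cis_conv_exp mult.commute)
qed

lemma mvec_mexp_Sz_tensor_Sz:
  assumes "i \<in> two_idx n m"
  shows "mvec (two_idx n m) (mexp (two_idx n m) (mscale (\<i> * complex_of_real c) (tensor (Sz n) (Sz m)))) w i
       = cis (c * spin_M n (fst i) * spin_M m (snd i)) * w i"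
proof -
  have fin: "finite (two_idx n m)" unfolding two_idx_def spin_idx_def by simp
  have "mvec (two_idx n m) (mexp (two_idx n m) (mscale (\<i> * complex_of_real c) (tensor (Sz n) (Sz m)))) w i
      = (\<Sum>i'\<in>two_idx n m. if i' = i then cis (c * spin_M n (fst i) * spin_M m (snd i)) * w i else 0)"
    unfolding mvec_def mexp_Sz_tensor_Sz[OF assms] by (intro sum.cong) auto
  also have "\<dots> = cis (c * spin_M n (fst i) * spin_M m (snd i)) * w i" using fin assms by simp
  finally show ?thesis .
qed

lemma SRU2_closed_form:
  assumes j: "j \<le> n" and k: "k \<le> m"
  shows "SRU2 n m \<gamma> \<Phi> \<mu> (j, k) = complex_of_real (coherent_amp m k) *
     (\<Sum>l\<in>{0..n}. rot_x n (complex_of_real \<gamma>) j l * complex_of_real (coherent_amp n l) *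
        cis ((\<Phi> + \<mu> * spin_M m k) * (real l - real j)))"
proof -
  have neg: "- \<i> * complex_of_real \<mu> = \<i> * complex_of_real (- \<mu>)" by simp
  have jk: "(j, k) \<in> two_idx n m" using j k unfolding two_idx_def spin_idx_def by simp
  have lk: "\<And>l. l \<in> {0..n} \<Longrightarrow> (l, k) \<in> two_idx n m" using k unfolding two_idx_def spin_idx_def by simp
  have "SRU2 n m \<gamma> \<Phi> \<mu> (j, k) = cis (- \<mu> * spin_M n j * spin_M m k) *
     (\<Sum>l\<in>{0..n}. (cis (- \<Phi> * (real j - real l)) * rot_x n (complex_of_real \<gamma>) j l) *
         (cis (\<mu> * spin_M n l * spin_M m k) * (coherent n (pi/2) 0 l * coherent m (pi/2) 0 k)))"
    unfolding SRU2_def Let_def neg mvec_mexp_Sz_tensor_Sz[OF jk] fst_conv snd_conv spin_idx_def mvec_tensor_mid[OF k]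
    by (intro arg_cong2[where f = "(*)"] refl sum.cong) (simp_all add: j mexp_SPhi mvec_mexp_Sz_tensor_Sz[OF lk])
  also have "\<dots> = complex_of_real (coherent_amp m k) *
     (\<Sum>l\<in>{0..n}. rot_x n (complex_of_real \<gamma>) j l * complex_of_real (coherent_amp n l) *
        cis ((\<Phi> + \<mu> * spin_M m k) * (real l - real j)))"
  proof -
    have "cis (- \<mu> * spin_M n j * spin_M m k) *
         ((cis (- \<Phi> * (real j - real l)) * rot_x n (complex_of_real \<gamma>) j l) *
         (cis (\<mu> * spin_M n l * spin_M m k) * (coherent n (pi/2) 0 l * coherent m (pi/2) 0 k)))
       = complex_of_real (coherent_amp m k) * (rot_x n (complex_of_real \<gamma>) j l * complex_of_real (coherent_amp n l) *
        cis ((\<Phi> + \<mu> * spin_M m k) * (real l - real j)))" if l: "l \<in> {0..n}" for l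
    proof -
      have c: "cis (- \<mu> * spin_M n j * spin_M m k) * cis (- \<Phi> * (real j - real l)) * cis (\<mu> * spin_M n l * spin_M m k)
            = cis ((\<Phi> + \<mu> * spin_M m k) * (real l - real j))"
        unfolding cis_mult by (rule arg_cong[where f=cis]) (simp add: spin_M_def field_simps)
      show ?thesis using l k c by (simp add: coherent_equator mult_ac)
    qed
    note pt = this
    show ?thesis unfolding sum_distrib_left by (rule sum.cong[OF refl]) (rule pt)
  qed
  finally show ?thesis .
qed

lemma has_vector_derivative_cis_affine:
  "((\<lambda>x. cis ((x + c) * r)) has_vector_derivative (\<i> * complex_of_real r * cis ((t + c) * r))) (at t)"
proof -
  let ?f = "\<lambda>z::complex. exp (\<i> * (z + complex_of_real c) * complex_of_real r)"
  have d: "(?f has_field_derivative (\<i> * complex_of_real r * ?f (complex_of_real t))) (at (complex_of_real t))"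
    by (auto intro!: derivative_eq_intros simp: mult_ac)
  have e: "\<And>x. cis ((x + c) * r) = ?f (complex_of_real x)"
    by (simp add: cis_conv_exp mult_ac distrib_left distrib_right)
  show ?thesis unfolding e using has_vector_derivative_real_field[OF d] by simp
qed

abbreviation twist :: "nat \<Rightarrow> real \<Rightarrow> real \<Rightarrow> nat \<Rightarrow> real" where
  "twist m \<Phi> \<mu> k \<equiv> \<Phi> + \<mu> * spin_M m k"

lemma cis_shift: "cis (\<theta> * (real l - real j)) = cis (- \<theta> * real j) * cis (\<theta> * real l)"
  by (simp add: cis_mult algebra_simps)

lemma sum_phase_eq_mvec_twisted:
  "(\<Sum>l\<in>{0..n}. X j l * complex_of_real (coherent_amp n l) * cis (\<theta> * (real l - real j)))
   = cis (- \<theta> * real j) * mvec {0..n} X (twisted n \<theta>) j"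
  unfolding mvec_def twisted_def cis_shift by (simp add: sum_distrib_left mult_ac)

lemma SRU2_twisted_form:
  assumes "j \<le> n" "k \<le> m"
  shows "SRU2 n m \<gamma> \<Phi> \<mu> (j, k) = complex_of_real (coherent_amp m k) * cis (- twist m \<Phi> \<mu> k * real j) *
     mvec {0..n} (rot_x n (complex_of_real \<gamma>)) (twisted n (twist m \<Phi> \<mu> k)) j"
  unfolding SRU2_closed_form[OF assms] sum_phase_eq_mvec_twisted by (simp add: mult.assoc)

lemma has_vector_derivative_rot_x:
  assumes "j \<le> n" "l \<le> n"
  shows "((\<lambda>g. rot_x n (complex_of_real g) j l) has_vector_derivative mmul {0..n} (rot_x n (complex_of_real \<gamma>)) (gen_x n) j l) (at \<gamma>)"
  unfolding rot_x_def
  by (rule has_vector_derivative_real_field, rule has_field_derivative_mexp_right) (use assms in auto)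

lemma mvec_gen_x: "mvec {0..n} (gen_x n) v l = \<i> * mvec {0..n} (Sx n) v l"
  unfolding mvec_def gen_x_def mscale_def by (simp add: sum_distrib_left mult.assoc)

lemma has_vector_derivative_SRU2_gamma:
  assumes j: "j \<le> n" and k: "k \<le> m"
  shows "((\<lambda>g. SRU2 n m g \<Phi> \<mu> (j, k)) has_vector_derivative
      complex_of_real (coherent_amp m k) * cis (- twist m \<Phi> \<mu> k * real j) *
      mvec {0..n} (rot_x n (complex_of_real \<gamma>)) (\<lambda>l. \<i> * Sx_tw n (twist m \<Phi> \<mu> k) l) j) (at \<gamma>)"
proof -
  let ?t = "twist m \<Phi> \<mu> k"
  have "((\<lambda>g. complex_of_real (coherent_amp m k) * (\<Sum>l\<in>{0..n}. rot_x n (complex_of_real g) j l * complex_of_real (coherent_amp n l) * cis (?t * (real l - real j))))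
      has_vector_derivative complex_of_real (coherent_amp m k) * (\<Sum>l\<in>{0..n}. mmul {0..n} (rot_x n (complex_of_real \<gamma>)) (gen_x n) j l * complex_of_real (coherent_amp n l) * cis (?t * (real l - real j)))) (at \<gamma>)"
    by (intro has_vector_derivative_mult_right has_vector_derivative_sum has_vector_derivative_mult_left has_vector_derivative_rot_x[OF j]) simp
  moreover have "(\<Sum>l\<in>{0..n}. mmul {0..n} (rot_x n (complex_of_real \<gamma>)) (gen_x n) j l * complex_of_real (coherent_amp n l) * cis (?t * (real l - real j)))
      = cis (- ?t * real j) * mvec {0..n} (rot_x n (complex_of_real \<gamma>)) (\<lambda>l. \<i> * Sx_tw n ?t l) j"
  proof -
    have e: "mvec {0..n} (gen_x n) (twisted n ?t) = (\<lambda>l. \<i> * Sx_tw n ?t l)"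
      by (rule ext) (simp only: mvec_gen_x Sx_tw_def)
    show ?thesis unfolding sum_phase_eq_mvec_twisted mvec_mmul[OF finite_atLeastAtMost] e ..
  qed
  ultimately show ?thesis unfolding SRU2_closed_form[OF j k] by (simp add: mult.assoc)
qed

lemma sum_rot_x_phase_deriv:
  assumes j: "j \<le> n"
  shows "(\<Sum>l\<in>{0..n}. rot_x n (complex_of_real (pi/2)) j l * complex_of_real (coherent_amp n l) *
           (\<i> * complex_of_real (real l - real j) * cis (\<theta> * (real l - real j))))
       = cis (- \<theta> * real j) * mvec {0..n} (rot_x n (complex_of_real (pi/2))) (\<lambda>l. \<i> * SySz_tw n \<theta> l) j"
proof -
  let ?E = "rot_x n (complex_of_real (pi/2))"
  let ?u = "twisted n \<theta>"
  have fin: "finite {0..n}" by simp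
  have "(\<Sum>l\<in>{0..n}. ?E j l * complex_of_real (coherent_amp n l) * (\<i> * complex_of_real (real l - real j) * cis (\<theta> * (real l - real j))))
      = cis (- \<theta> * real j) * \<i> * (\<Sum>l\<in>{0..n}. ?E j l * (complex_of_real (spin_M n l) - complex_of_real (spin_M n j)) * ?u l)"
    unfolding cis_shift twisted_def spin_M_def by (simp add: sum_distrib_left mult_ac)
  also have "(\<Sum>l\<in>{0..n}. ?E j l * (complex_of_real (spin_M n l) - complex_of_real (spin_M n j)) * ?u l)
      = mvec {0..n} ?E (Sz_tw n \<theta>) j - (\<Sum>l\<in>{0..n}. mmul {0..n} (Sz n) ?E j l * ?u l)"
  proof -
    have "(\<Sum>l\<in>{0..n}. ?E j l * (complex_of_real (spin_M n l) - complex_of_real (spin_M n j)) * ?u l)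
        = (\<Sum>l\<in>{0..n}. ?E j l * Sz_tw n \<theta> l - mmul {0..n} (Sz n) ?E j l * ?u l)"
    proof (intro sum.cong refl)
      fix l assume "l \<in> {0..n}"
      then have l: "l \<le> n" by simp
      show "?E j l * (complex_of_real (spin_M n l) - complex_of_real (spin_M n j)) * ?u l
          = ?E j l * Sz_tw n \<theta> l - mmul {0..n} (Sz n) ?E j l * ?u l"
        unfolding Sz_tw_eq[OF l] mmul_Sz_left using j by (simp add: algebra_simps)
    qed
    then show ?thesis by (simp only: sum_subtractf mvec_def)
  qed
  also have "(\<Sum>l\<in>{0..n}. mmul {0..n} (Sz n) ?E j l * ?u l) = - mvec {0..n} (mmul {0..n} ?E (Sy n)) ?u j"
    unfolding mvec_def using Sz_rot_x_quarter[OF j] by (simp add: sum_negf[symmetric])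
  also have "mvec {0..n} ?E (Sz_tw n \<theta>) j - - mvec {0..n} (mmul {0..n} ?E (Sy n)) ?u j
      = mvec {0..n} ?E (SySz_tw n \<theta>) j"
  proof -
    show ?thesis unfolding mvec_mmul[OF fin] SySz_tw_def mvec_def[of "{0..n}" ?E]
      by (simp only: minus_minus diff_conv_add_uminus distrib_left sum.distrib add.commute)
  qed
  finally show ?thesis by (simp add: mvec_def sum_distrib_left mult_ac)
qed

lemma has_vector_derivative_SRU2_Phi:
  assumes j: "j \<le> n" and k: "k \<le> m"
  shows "((\<lambda>p. SRU2 n m (pi/2) p \<mu> (j, k)) has_vector_derivative
      complex_of_real (coherent_amp m k) * cis (- twist m \<Phi> \<mu> k * real j) *
      mvec {0..n} (rot_x n (complex_of_real (pi/2))) (\<lambda>l. \<i> * SySz_tw n (twist m \<Phi> \<mu> k) l) j) (at \<Phi>)"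
proof -
  let ?E = "rot_x n (complex_of_real (pi/2))"
  have "((\<lambda>p. complex_of_real (coherent_amp m k) * (\<Sum>l\<in>{0..n}. ?E j l * complex_of_real (coherent_amp n l) * cis ((p + \<mu> * spin_M m k) * (real l - real j))))
      has_vector_derivative complex_of_real (coherent_amp m k) * (\<Sum>l\<in>{0..n}. ?E j l * complex_of_real (coherent_amp n l) *
         (\<i> * complex_of_real (real l - real j) * cis ((\<Phi> + \<mu> * spin_M m k) * (real l - real j))))) (at \<Phi>)"
    by (intro has_vector_derivative_mult_right has_vector_derivative_sum has_vector_derivative_cis_affine)
  then show ?thesis unfolding SRU2_closed_form[OF j k] sum_rot_x_phase_deriv[OF j] by (simp add: mult.assoc)
qed

section \<open>Quantum Fisher informations\<close>

lemma cinner_product_form: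
  assumes U: "unitary_on {0..n} E"
    and f: "\<And>j k. j \<le> n \<Longrightarrow> k \<le> m \<Longrightarrow> f (j, k) = complex_of_real (b k) * cis (ph k j) * mvec {0..n} E (x k) j"
    and g: "\<And>j k. j \<le> n \<Longrightarrow> k \<le> m \<Longrightarrow> g (j, k) = complex_of_real (b k) * cis (ph k j) * mvec {0..n} E (y k) j"
  shows "cinner (two_idx n m) f g = (\<Sum>k\<in>{0..m}. complex_of_real (b k ^ 2) * cinner {0..n} (x k) (y k))"
proof -
  have "cinner (two_idx n m) f g = (\<Sum>j\<in>{0..n}. \<Sum>k\<in>{0..m}. cnj (f (j, k)) * g (j, k))"
    unfolding cinner_def two_idx_def spin_idx_def sum.cartesian_product by (simp add: case_prod_beta)
  also have "\<dots> = (\<Sum>k\<in>{0..m}. \<Sum>j\<in>{0..n}. complex_of_real (b k ^ 2) * (cnj (mvec {0..n} E (x k) j) * mvec {0..n} E (y k) j))"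
  proof (subst sum.swap, intro sum.cong refl)
    fix k j assume k: "k \<in> {0..m}" and j: "j \<in> {0..n}"
    have c: "cnj (cis (ph k j)) * cis (ph k j) = 1" by (simp add: cis_cnj cis_mult)
    have "cnj (f (j, k)) * g (j, k) = complex_of_real (b k ^ 2) * (cnj (cis (ph k j)) * cis (ph k j)) *
            (cnj (mvec {0..n} E (x k) j) * mvec {0..n} E (y k) j)"
      using j k by (simp add: f g power2_eq_square mult_ac)
    then show "cnj (f (j, k)) * g (j, k) = complex_of_real (b k ^ 2) * (cnj (mvec {0..n} E (x k) j) * mvec {0..n} E (y k) j)"
      by (simp only: c mult_1_right)
  qed
  also have "\<dots> = (\<Sum>k\<in>{0..m}. complex_of_real (b k ^ 2) * cinner {0..n} (mvec {0..n} E (x k)) (mvec {0..n} E (y k)))"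
    unfolding cinner_def by (simp add: sum_distrib_left)
  also have "\<dots> = (\<Sum>k\<in>{0..m}. complex_of_real (b k ^ 2) * cinner {0..n} (x k) (y k))"
    using cinner_unitary[of "{0..n}" E, OF _ U] by simp
  finally show ?thesis .
qed

lemma qfi_eq:
  assumes "\<And>i. i \<in> I \<Longrightarrow> ((\<lambda>s. \<psi> s i) has_vector_derivative d\<psi> i) (at t)"
  shows "qfi I \<psi> t = 4 * (Re (cinner I d\<psi> d\<psi>) - (cmod (cinner I (\<psi> t) d\<psi>))\<^sup>2)"
proof -
  have "\<And>i. i \<in> I \<Longrightarrow> vector_derivative (\<lambda>s. \<psi> s i) (at t) = d\<psi> i"
    using assms by (rule vector_derivative_at)
  then have "cinner I (\<lambda>i. vector_derivative (\<lambda>s. \<psi> s i) (at t)) (\<lambda>i. vector_derivative (\<lambda>s. \<psi> s i) (at t)) = cinner I d\<psi> d\<psi>"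
     "cinner I (\<psi> t) (\<lambda>i. vector_derivative (\<lambda>s. \<psi> s i) (at t)) = cinner I (\<psi> t) d\<psi>"
    unfolding cinner_def by (auto intro!: sum.cong)
  then show ?thesis unfolding qfi_def Let_def by simp
qed

lemma qfi_product_form:
  assumes U: "unitary_on {0..n} E"
    and psi: "\<And>j k. j \<le> n \<Longrightarrow> k \<le> m \<Longrightarrow>
      \<psi> t (j, k) = complex_of_real (b k) * cis (ph k j) * mvec {0..n} E (v k) j"
    and dpsi: "\<And>j k. j \<le> n \<Longrightarrow> k \<le> m \<Longrightarrow> ((\<lambda>s. \<psi> s (j, k)) has_vector_derivative
      complex_of_real (b k) * cis (ph k j) * mvec {0..n} E (w k) j) (at t)"
  shows "qfi (two_idx n m) \<psi> t =
    4 * (Re (\<Sum>k\<in>{0..m}. complex_of_real (b k ^ 2) * cinner {0..n} (w k) (w k))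
       - (cmod (\<Sum>k\<in>{0..m}. complex_of_real (b k ^ 2) * cinner {0..n} (v k) (w k)))\<^sup>2)"
proof -
  define d\<psi> where "d\<psi> = (\<lambda>(j, k). complex_of_real (b k) * cis (ph k j) * mvec {0..n} E (w k) j)"
  have "qfi (two_idx n m) \<psi> t = 4 * (Re (cinner (two_idx n m) d\<psi> d\<psi>) - (cmod (cinner (two_idx n m) (\<psi> t) d\<psi>))\<^sup>2)"
  proof (rule qfi_eq)
    fix i assume "i \<in> two_idx n m"
    then obtain j k where "i = (j, k)" "j \<le> n" "k \<le> m" unfolding two_idx_def spin_idx_def by auto
    then show "((\<lambda>s. \<psi> s i) has_vector_derivative d\<psi> i) (at t)" using dpsi by (simp add: d\<psi>_def)
  qed
  also have "cinner (two_idx n m) d\<psi> d\<psi> = (\<Sum>k\<in>{0..m}. complex_of_real (b k ^ 2) * cinner {0..n} (w k) (w k))"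
    by (rule cinner_product_form[where ph = ph and b = b, OF U]) (simp_all add: d\<psi>_def)
  also have "cinner (two_idx n m) (\<psi> t) d\<psi> = (\<Sum>k\<in>{0..m}. complex_of_real (b k ^ 2) * cinner {0..n} (v k) (w k))"
    by (rule cinner_product_form[where ph = ph and b = b, OF U]) (simp_all add: psi d\<psi>_def)
  finally show ?thesis .
qed

lemma fisher_moment_sum:
  assumes "\<And>k. cinner I (v k) (x k) = complex_of_real (r k)"
    and "\<And>k. cinner I (x k) (x k) = complex_of_real (q k)"
  shows "4 * (Re (\<Sum>k\<in>K. complex_of_real (p k) * cinner I (\<lambda>l. \<i> * x k l) (\<lambda>l. \<i> * x k l))
            - (cmod (\<Sum>k\<in>K. complex_of_real (p k) * cinner I (v k) (\<lambda>l. \<i> * x k l)))\<^sup>2)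
       = 4 * ((\<Sum>k\<in>K. p k * q k) - (\<Sum>k\<in>K. p k * r k)\<^sup>2)"
proof -
  have "(\<Sum>k\<in>K. complex_of_real (p k) * cinner I (v k) (\<lambda>l. \<i> * x k l)) = \<i> * complex_of_real (\<Sum>k\<in>K. p k * r k)"
    by (simp add: cinner_scale_right assms(1) sum_distrib_left mult_ac)
  moreover have "(\<Sum>k\<in>K. complex_of_real (p k) * cinner I (\<lambda>l. \<i> * x k l) (\<lambda>l. \<i> * x k l)) = complex_of_real (\<Sum>k\<in>K. p k * q k)"
    by (simp add: cinner_scale_left cinner_scale_right assms(2))
  ultimately show ?thesis by (simp add: norm_mult del: of_real_sum)
qed

lemma coherent_amp_power2: "coherent_amp m k ^ 2 = binom_weight m k"
  using coherent_amp_sq by (simp add: power2_eq_square)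

lemma qfi_Phi:
  "qfi (two_idx n m) (\<lambda>p. SRU2 n m (pi/2) p \<mu>) \<Phi>
   = 4 * ((\<Sum>k\<in>{0..m}. binom_weight m k * mean_sq_SySz n (twist m \<Phi> \<mu> k))
        - (\<Sum>k\<in>{0..m}. binom_weight m k * mean_SySz n (twist m \<Phi> \<mu> k))\<^sup>2)"
proof -
  let ?v = "\<lambda>k. twisted n (twist m \<Phi> \<mu> k)" and ?w = "\<lambda>k l. \<i> * SySz_tw n (twist m \<Phi> \<mu> k) l"
  have "qfi (two_idx n m) (\<lambda>p. SRU2 n m (pi/2) p \<mu>) \<Phi> =
    4 * (Re (\<Sum>k\<in>{0..m}. complex_of_real (coherent_amp m k ^ 2) * cinner {0..n} (?w k) (?w k))
       - (cmod (\<Sum>k\<in>{0..m}. complex_of_real (coherent_amp m k ^ 2) * cinner {0..n} (?v k) (?w k)))\<^sup>2)"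
    by (rule qfi_product_form[OF rot_x_unitary[of n "pi/2"], where ph = "\<lambda>k j. - twist m \<Phi> \<mu> k * real j"])
       (erule (1) SRU2_twisted_form has_vector_derivative_SRU2_Phi)+
  also have "\<dots> = 4 * ((\<Sum>k\<in>{0..m}. binom_weight m k * mean_sq_SySz n (twist m \<Phi> \<mu> k))
        - (\<Sum>k\<in>{0..m}. binom_weight m k * mean_SySz n (twist m \<Phi> \<mu> k))\<^sup>2)"
    unfolding coherent_amp_power2 by (rule fisher_moment_sum[OF cinner_twisted_SySz_tw cinner_SySz_tw_SySz_tw])
  finally show ?thesis .
qed

lemma qfi_gamma:
  "qfi (two_idx n m) (\<lambda>g. SRU2 n m g \<Phi> \<mu>) \<gamma>
   = 4 * ((\<Sum>k\<in>{0..m}. binom_weight m k * mean_sq_Sx n (twist m \<Phi> \<mu> k))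
        - (\<Sum>k\<in>{0..m}. binom_weight m k * mean_Sx n (twist m \<Phi> \<mu> k))\<^sup>2)"
proof -
  let ?v = "\<lambda>k. twisted n (twist m \<Phi> \<mu> k)" and ?w = "\<lambda>k l. \<i> * Sx_tw n (twist m \<Phi> \<mu> k) l"
  have "qfi (two_idx n m) (\<lambda>g. SRU2 n m g \<Phi> \<mu>) \<gamma> =
    4 * (Re (\<Sum>k\<in>{0..m}. complex_of_real (coherent_amp m k ^ 2) * cinner {0..n} (?w k) (?w k))
       - (cmod (\<Sum>k\<in>{0..m}. complex_of_real (coherent_amp m k ^ 2) * cinner {0..n} (?v k) (?w k)))\<^sup>2)"
    by (rule qfi_product_form[OF rot_x_unitary[of n \<gamma>], where ph = "\<lambda>k j. - twist m \<Phi> \<mu> k * real j"])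
       (erule (1) SRU2_twisted_form has_vector_derivative_SRU2_gamma)+
  also have "\<dots> = 4 * ((\<Sum>k\<in>{0..m}. binom_weight m k * mean_sq_Sx n (twist m \<Phi> \<mu> k))
        - (\<Sum>k\<in>{0..m}. binom_weight m k * mean_Sx n (twist m \<Phi> \<mu> k))\<^sup>2)"
    unfolding coherent_amp_power2 by (rule fisher_moment_sum[OF cinner_twisted_Sx_tw cinner_Sx_tw_Sx_tw])
  finally show ?thesis .
qed

lemma sum_binom_weight_cis: "(\<Sum>k\<in>{0..m}. complex_of_real (binom_weight m k) * cis (b * spin_M m k)) = complex_of_real (cos (b/2) ^ m)"
proof -
  let ?x = "cis (b/2) / 2" and ?y = "cis (- (b/2)) / 2"
  have xy: "?x + ?y = complex_of_real (cos (b/2))"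
    by (simp add: cis_eq_cos_sin complex_eq_iff)
  have "(?x + ?y) ^ m = (\<Sum>k\<le>m. of_nat (m choose k) * ?x ^ k * ?y ^ (m - k))"
    by (rule binomial_ring)
  also have "\<dots> = (\<Sum>k\<le>m. complex_of_real (binom_weight m k) * cis (b * spin_M m k))"
  proof (intro sum.cong refl)
    fix k assume "k \<in> {..m}"
    then have k: "k \<le> m" by simp
    have p2: "(2::complex) ^ k * 2 ^ (m - k) = 2 ^ m" using k by (simp add: power_add[symmetric])
    have "?x ^ k * ?y ^ (m - k) = (cis (b/2) ^ k * cis (- (b/2)) ^ (m - k)) / (2 ^ k * 2 ^ (m - k))"
      by (simp add: power_divide)
    also have "\<dots> = cis (real k * (b/2) + real (m - k) * (- (b/2))) / 2 ^ m"
      unfolding p2 by (simp only: Complex.DeMoivre cis_mult)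
    also have "real k * (b/2) + real (m - k) * (- (b/2)) = b * spin_M m k"
      using k by (simp add: spin_M_def of_nat_diff field_simps)
    finally have e: "?x ^ k * ?y ^ (m - k) = cis (b * spin_M m k) / 2 ^ m" .
    show "of_nat (m choose k) * ?x ^ k * ?y ^ (m - k) = complex_of_real (binom_weight m k) * cis (b * spin_M m k)"
      unfolding mult.assoc e binom_weight_def by simp
  qed
  finally show ?thesis unfolding xy atLeast0AtMost by simp
qed

lemma sum_binom_weight_cos: "(\<Sum>k\<in>{0..m}. binom_weight m k * cos (a + b * spin_M m k)) = cos a * cos (b/2) ^ m"
  and sum_binom_weight_sin: "(\<Sum>k\<in>{0..m}. binom_weight m k * sin (a + b * spin_M m k)) = sin a * cos (b/2) ^ m"
proof -
  have "(\<Sum>k\<in>{0..m}. complex_of_real (binom_weight m k) * cis (a + b * spin_M m k))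
      = cis a * (\<Sum>k\<in>{0..m}. complex_of_real (binom_weight m k) * cis (b * spin_M m k))"
    by (simp add: sum_distrib_left cis_mult[symmetric] mult_ac)
  also have "\<dots> = cis a * complex_of_real (cos (b/2) ^ m)" by (simp only: sum_binom_weight_cis)
  finally have e: "(\<Sum>k\<in>{0..m}. complex_of_real (binom_weight m k) * cis (a + b * spin_M m k)) = cis a * complex_of_real (cos (b/2) ^ m)" .
  from arg_cong[OF e, of Re] show "(\<Sum>k\<in>{0..m}. binom_weight m k * cos (a + b * spin_M m k)) = cos a * cos (b/2) ^ m"
    by (simp add: Re_sum)
  from arg_cong[OF e, of Im] show "(\<Sum>k\<in>{0..m}. binom_weight m k * sin (a + b * spin_M m k)) = sin a * cos (b/2) ^ m"
    by (simp add: Im_sum)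
qed

lemma sum_binom_weight: "(\<Sum>k\<in>{0..m}. binom_weight m k) = 1"
  using sum_binom_weight_cos[of m 0 0] by simp

lemma sum_binom_weight_mean_sq_Sx: "(\<Sum>k\<in>{0..m}. binom_weight m k * mean_sq_Sx n (twist m \<Phi> \<mu> k)) = (real n ^ 2 + real n) / 8 + (real n ^ 2 - real n) / 8 * (cos (2 * \<Phi>) * cos \<mu> ^ m)"
proof -
  have "(\<Sum>k\<in>{0..m}. binom_weight m k * mean_sq_Sx n (twist m \<Phi> \<mu> k))
      = (real n ^ 2 + real n) / 8 * (\<Sum>k\<in>{0..m}. binom_weight m k) + (real n ^ 2 - real n) / 8 * (\<Sum>k\<in>{0..m}. binom_weight m k * cos (2 * \<Phi> + (2 * \<mu>) * spin_M m k))"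
  proof -
    have "\<And>k. binom_weight m k * mean_sq_Sx n (twist m \<Phi> \<mu> k) = (real n ^ 2 + real n) / 8 * binom_weight m k + (real n ^ 2 - real n) / 8 * (binom_weight m k * cos (2 * \<Phi> + (2 * \<mu>) * spin_M m k))"
      by (simp add: mean_sq_Sx_def algebra_simps)
    then show ?thesis by (simp only: sum.distrib sum_distrib_left)
  qed
  then show ?thesis unfolding sum_binom_weight sum_binom_weight_cos by simp
qed

lemma sum_binom_weight_mean_sq_SySz: "(\<Sum>k\<in>{0..m}. binom_weight m k * mean_sq_SySz n (twist m \<Phi> \<mu> k)) = (real n ^ 2 + real n) / 8 + real n / 4 - (real n ^ 2 - real n) / 8 * (cos (2 * \<Phi>) * cos \<mu> ^ m)"
proof -
  have "(\<Sum>k\<in>{0..m}. binom_weight m k * mean_sq_SySz n (twist m \<Phi> \<mu> k))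
      = ((real n ^ 2 + real n) / 8 + real n / 4) * (\<Sum>k\<in>{0..m}. binom_weight m k) - (real n ^ 2 - real n) / 8 * (\<Sum>k\<in>{0..m}. binom_weight m k * cos (2 * \<Phi> + (2 * \<mu>) * spin_M m k))"
  proof -
    have "\<And>k. binom_weight m k * mean_sq_SySz n (twist m \<Phi> \<mu> k) = ((real n ^ 2 + real n) / 8 + real n / 4) * binom_weight m k - (real n ^ 2 - real n) / 8 * (binom_weight m k * cos (2 * \<Phi> + (2 * \<mu>) * spin_M m k))"
      by (simp add: mean_sq_SySz_def algebra_simps)
    then show ?thesis by (simp only: sum_subtractf sum_distrib_left)
  qed
  then show ?thesis unfolding sum_binom_weight sum_binom_weight_cos by simp
qed

lemma sum_binom_weight_mean_Sx: "(\<Sum>k\<in>{0..m}. binom_weight m k * mean_Sx n (twist m \<Phi> \<mu> k)) = real n / 2 * (cos \<Phi> * cos (\<mu>/2) ^ m)"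
proof -
  have "\<And>k. binom_weight m k * mean_Sx n (twist m \<Phi> \<mu> k) = real n / 2 * (binom_weight m k * cos (\<Phi> + \<mu> * spin_M m k))"
    by (simp add: mean_Sx_def)
  then show ?thesis by (simp only: sum_distrib_left[symmetric] sum_binom_weight_cos)
qed

lemma sum_binom_weight_mean_SySz: "(\<Sum>k\<in>{0..m}. binom_weight m k * mean_SySz n (twist m \<Phi> \<mu> k)) = - (real n / 2 * (sin \<Phi> * cos (\<mu>/2) ^ m))"
proof -
  have "\<And>k. binom_weight m k * mean_SySz n (twist m \<Phi> \<mu> k) = - (real n / 2 * (binom_weight m k * sin (\<Phi> + \<mu> * spin_M m k)))"
    by (simp add: mean_SySz_def)
  then show ?thesis by (simp only: sum_negf sum_distrib_left[symmetric] sum_binom_weight_sin)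
qed

lemma qfi_Phi_closed_form:
  "qfi (two_idx n m) (\<lambda>p. SRU2 n m (pi/2) p \<mu>) \<Phi>
   = 4 * ((real n ^ 2 + real n) / 8 + real n / 4 - (real n ^ 2 - real n) / 8 * (cos (2 * \<Phi>) * cos \<mu> ^ m)
        - (real n / 2 * (sin \<Phi> * cos (\<mu>/2) ^ m))\<^sup>2)"
  unfolding qfi_Phi sum_binom_weight_mean_sq_SySz sum_binom_weight_mean_SySz by simp

lemma qfi_gamma_closed_form:
  "qfi (two_idx n m) (\<lambda>g. SRU2 n m g \<Phi> \<mu>) \<gamma>
   = 4 * ((real n ^ 2 + real n) / 8 + (real n ^ 2 - real n) / 8 * (cos (2 * \<Phi>) * cos \<mu> ^ m)
        - (real n / 2 * (cos \<Phi> * cos (\<mu>/2) ^ m))\<^sup>2)"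
  unfolding qfi_gamma sum_binom_weight_mean_sq_Sx sum_binom_weight_mean_Sx ..

lemma qfi_sum_rule:
  "qfi (two_idx n m) (\<lambda>p. SRU2 n m (pi/2) p \<mu>) \<Phi> + qfi (two_idx n m) (\<lambda>g. SRU2 n m g \<Phi> \<mu>) \<gamma>
   = 4 * spin_S n * (spin_S n + 1 - spin_S n * cos (\<mu>/2) ^ (2 * m))"
proof -
  have p: "cos (\<mu>/2) ^ (2 * m) = (cos (\<mu>/2) ^ m)\<^sup>2" by (simp add: power_mult[symmetric] mult.commute)
  have sc: "(sin \<Phi>)\<^sup>2 = 1 - (cos \<Phi>)\<^sup>2" by (rule sin_squared_eq)
  show ?thesis
    unfolding qfi_Phi_closed_form qfi_gamma_closed_form spin_S_def p power_mult_distrib sc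
    by (simp add: field_simps power2_eq_square)
qed

lemma qfi_Phi_at_pi:
  assumes "m \<ge> 1"
  shows "qfi (two_idx n m) (\<lambda>p. SRU2 n m (pi/2) p pi) \<Phi>
     = 4 * (spin_S n)\<^sup>2 + 2 * spin_S n - (real n ^ 2 - real n) / 2 * (1 + (-1) ^ m * cos (2 * \<Phi>))"
proof -
  have "cos (pi / 2) ^ m = 0" using assms by simp
  then show ?thesis unfolding qfi_Phi_closed_form spin_S_def by (simp add: field_simps power2_eq_square)
qed

lemma qfi_Phi_at_pi_max:
  assumes "n \<ge> 1" "m \<ge> 1"
  shows "qfi (two_idx n m) (\<lambda>p. SRU2 n m (pi/2) p pi) \<Phi> \<le> 4 * (spin_S n)\<^sup>2 + 2 * spin_S n"
    and "qfi (two_idx n m) (\<lambda>p. SRU2 n m (pi/2) p pi) (if even m then pi/2 else 0) = 4 * (spin_S n)\<^sup>2 + 2 * spin_S n"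
proof -
  have "0 \<le> real n ^ 2 - real n" using assms(1) by (simp add: power2_eq_square)
  moreover have "0 \<le> 1 + (-1) ^ m * cos (2 * \<Phi>)"
    using cos_ge_minus_one[of "2 * \<Phi>"] cos_le_one[of "2 * \<Phi>"]
    by (cases "even m") (simp_all add: minus_one_power_iff del: cos_ge_minus_one cos_le_one)
  ultimately show "qfi (two_idx n m) (\<lambda>p. SRU2 n m (pi/2) p pi) \<Phi> \<le> 4 * (spin_S n)\<^sup>2 + 2 * spin_S n"
    unfolding qfi_Phi_at_pi[OF assms(2)] by simp
  show "qfi (two_idx n m) (\<lambda>p. SRU2 n m (pi/2) p pi) (if even m then pi/2 else 0) = 4 * (spin_S n)\<^sup>2 + 2 * spin_S n"
    unfolding qfi_Phi_at_pi[OF assms(2)] by simp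
qed

theorem mainTheorem9:
  fixes nM nP :: nat
  assumes "nM \<ge> 1" and "nP \<ge> 1"
  shows "(\<forall>\<Phi> \<mu> \<gamma> :: real.
            qfi (two_idx nM nP) (\<lambda>\<phi>. SRU2 nM nP (pi/2) \<phi> \<mu>) \<Phi>
          + qfi (two_idx nM nP) (\<lambda>g. SRU2 nM nP g \<Phi> \<mu>) \<gamma>
          = 4 * spin_S nM * (spin_S nM + 1 - spin_S nM * cos (\<mu>/2) ^ (2 * nP)))
       \<and> (\<exists>\<Phi>. qfi (two_idx nM nP) (\<lambda>\<phi>. SRU2 nM nP (pi/2) \<phi> pi) \<Phi>
               = 4 * (spin_S nM)\<^sup>2 + 2 * spin_S nM)
       \<and> (\<forall>\<Phi>. qfi (two_idx nM nP) (\<lambda>\<phi>. SRU2 nM nP (pi/2) \<phi> pi) \<Phi>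
               \<le> 4 * (spin_S nM)\<^sup>2 + 2 * spin_S nM)"
  using qfi_sum_rule qfi_Phi_at_pi_max[OF assms] by blast

end
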